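(* Let $n\ge2$, $R>0$, $\varepsilon>0$. Suppose $r^{n-1}f\in L^1((0,R))$, $f\ge0$ a.e. in $(0,R)$ and $f\not\equiv0$. Then there is a nonnegative classical solution to the problem $-\varepsilon r^{n-1}\Big(\frac{1}{r^{n-1}}w_r\Big)_r+\frac{1}{n r^{n(n-1)}}w^n=L_f$ in $(0,R)$, $w(0)=w_r(0)=0$, $w_r(R)=\varepsilon R^{n-1}$.
   Context: $L_f(s):=\int_0^s t^{n-1}f(t)\,dt$. Subscripts $r$ denote derivatives in $r$. A classical solution is a twice differentiable function satisfying the equation in $(0,R)$ and the boundary conditions pointwise. *)

theory Defs
  imports "HOL-Analysis.Analysis"
begin

definition Lf :: "nat \<Rightarrow> (real \<Rightarrow> real) \<Rightarrow> real \<Rightarrow> real" where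
  "Lf n f s = (LINT t:{0..s}|lborel. t ^ (n - 1) * f t)"

end

theory Submission
  imports Defs
begin

text \<open>With \<open>s = r ^ n / n\<close> and \<open>w r = W s\<close> the problem becomes
  \<open>eps * W'' = q s * W ^ n - l s\<close> on \<open>(0, R ^ n / n]\<close>, \<open>W 0 = 0\<close>, \<open>W' (R ^ n / n) = eps\<close>, with
  \<open>q > 0\<close> and \<open>l \<ge> 0\<close> singular at \<open>s = 0\<close>. On \<open>[a, b]\<close> with \<open>a > 0\<close> a solution lying below the
  barrier \<open>e * s powr ((n - 1) / n) + K * s\<close> is obtained by monotone iteration of the linear problem
  \<open>-eps * y'' + mu * y = l + mu * y - q * y ^ n\<close>, whose solution operator preserves order by the
  maximum principle. By comparison these solutions increase as \<open>a\<close> decreases to \<open>0\<close>, their limit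
  solves the equation on \<open>(0, b]\<close>, and the barriers with arbitrarily small \<open>e\<close> give \<open>w' 0 = 0\<close>.\<close>

section \<open>Comparison principle\<close>

definition has_derivs2_on :: "real \<Rightarrow> real \<Rightarrow> (real \<Rightarrow> real) \<Rightarrow> (real \<Rightarrow> real) \<Rightarrow> (real \<Rightarrow> real) \<Rightarrow> bool"
  where "has_derivs2_on a b y y' y'' \<longleftrightarrow>
    continuous_on {a..b} y \<and> continuous_on {a..b} y' \<and>
    (\<forall>x\<in>{a<..<b}. (y has_real_derivative y' x) (at x) \<and> (y' has_real_derivative y'' x) (at x))"

lemma has_derivs2_onI:
  assumes "continuous_on {a..b} y" "continuous_on {a..b} y'"
    and "\<And>x. x \<in> {a<..<b} \<Longrightarrow> (y has_real_derivative y' x) (at x)"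
    and "\<And>x. x \<in> {a<..<b} \<Longrightarrow> (y' has_real_derivative y'' x) (at x)"
  shows "has_derivs2_on a b y y' y''"
  using assms by (simp add: has_derivs2_on_def)

lemma has_derivs2_onD:
  assumes "has_derivs2_on a b y y' y''"
  shows "continuous_on {a..b} y" "continuous_on {a..b} y'"
    and "\<And>x. x \<in> {a<..<b} \<Longrightarrow> (y has_real_derivative y' x) (at x)"
    and "\<And>x. x \<in> {a<..<b} \<Longrightarrow> (y' has_real_derivative y'' x) (at x)"
  using assms by (auto simp: has_derivs2_on_def)

lemma has_derivs2_on_diff:
  assumes "has_derivs2_on a b y y' y''" "has_derivs2_on a b z z' z''"
  shows "has_derivs2_on a b (\<lambda>x. y x - z x) (\<lambda>x. y' x - z' x) (\<lambda>x. y'' x - z'' x)"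
  using assms unfolding has_derivs2_on_def by (simp add: continuous_on_diff DERIV_diff)

lemma has_derivs2_on_subset:
  assumes "has_derivs2_on a b y y' y''" "a \<le> c" "d \<le> b"
  shows "has_derivs2_on c d y y' y''"
  using assms unfolding has_derivs2_on_def
  by (auto intro: continuous_on_subset[of "{a..b}"])

lemma has_derivs2_on_cong:
  assumes "has_derivs2_on a b y y' y''" "\<And>x. x \<in> {a<..<b} \<Longrightarrow> y'' x = z'' x"
  shows "has_derivs2_on a b y y' z''"
  using assms by (simp add: has_derivs2_on_def)

lemma has_derivs2_on_integrals:
  assumes "has_derivs2_on a b y y' y''" "t \<in> {a..b}"
  shows "(y' has_integral (y b - y t)) {t..b}" "(y'' has_integral (y' b - y' t)) {t..b}"
proof -
  have "continuous_on {t..b} y" "continuous_on {t..b} y'"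
    using has_derivs2_onD(1,2)[OF assms(1)] assms(2) by (auto intro: continuous_on_subset)
  moreover have "(y has_vector_derivative y' x) (at x)" "(y' has_vector_derivative y'' x) (at x)"
    if "x \<in> {t<..<b}" for x
    using has_derivs2_onD(3,4)[OF assms(1), of x] that assms(2)
    by (auto simp: has_real_derivative_iff_has_vector_derivative[symmetric])
  ultimately show "(y' has_integral (y b - y t)) {t..b}" "(y'' has_integral (y' b - y' t)) {t..b}"
    using assms(2) by (auto intro!: fundamental_theorem_of_calculus_interior)
qed

text \<open>If \<open>u' x0 \<le> 0\<close>, strict convexity where \<open>u > 0\<close> makes \<open>u'\<close> negative just left of \<open>x0\<close>,
  so \<open>u\<close> would exceed its maximum there.\<close>
lemma positive_max_imp_slope_pos:
  fixes u u' u'' :: "real \<Rightarrow> real"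
  assumes u: "has_derivs2_on a b u u' u''"
    and convex: "\<And>x. x \<in> {a<..<b} \<Longrightarrow> u x > 0 \<Longrightarrow> u'' x > 0"
    and x0: "x0 \<in> {a<..b}" and u0: "u x0 > 0"
    and max: "\<And>x. x \<in> {a..b} \<Longrightarrow> u x \<le> u x0"
  shows "u' x0 > 0"
proof (rule ccontr)
  assume slope: "\<not> u' x0 > 0"
  note cu = has_derivs2_onD(1)[OF u] and cu' = has_derivs2_onD(2)[OF u]
    and du = has_derivs2_onD(3)[OF u] and du' = has_derivs2_onD(4)[OF u]
  have "continuous (at x0 within {a..b}) u" using cu x0 by (simp add: continuous_on_eq_continuous_within)
  then have "\<forall>\<^sub>F x in at x0 within {a..b}. u x > 0" using u0
    by (simp add: continuous_within order_tendstoD(1))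
  then obtain d where d: "d > 0" "\<And>x. x \<in> {a..b} \<Longrightarrow> x \<noteq> x0 \<Longrightarrow> dist x x0 < d \<Longrightarrow> u x > 0"
    unfolding eventually_at by blast
  define t where "t = max a (x0 - d/2)"
  have t: "a \<le> t" "t < x0" "x0 - t < d" using x0 d by (auto simp: t_def)
  have pos: "u x > 0" if "x \<in> {t<..x0}" for x
    using d(2)[of x] u0 that t x0 by (cases "x = x0") (auto simp: dist_real_def)
  have neg: "u' z < 0" if z: "z \<in> {t<..<x0}" for z
  proof -
    have "continuous_on {z..x0} u'" using cu' by (rule continuous_on_subset) (use z t x0 in auto)
    moreover have "\<And>x. z < x \<Longrightarrow> x < x0 \<Longrightarrow> u' differentiable (at x)"
      using du' z t x0 unfolding real_differentiable_def
      by (metis greaterThanAtMost_iff greaterThanLessThan_iff le_less_trans less_eq_real_def x0)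
    ultimately obtain l y where y: "z < y" "y < x0" "DERIV u' y :> l" "u' x0 - u' z = (x0 - z) * l"
      using MVT[of z x0 u'] z by auto
    have "y \<in> {a<..<b}" using y z t x0 by auto
    then have "l = u'' y" using du'[of y] y(3) DERIV_unique by blast
    moreover have "u'' y > 0" using convex[of y] pos[of y] \<open>y \<in> {a<..<b}\<close> y z by auto
    ultimately have "(x0 - z) * l > 0" using z by simp
    then show ?thesis using y(4) slope by linarith
  qed
  have "continuous_on {t..x0} u" using cu by (rule continuous_on_subset) (use t x0 in auto)
  moreover have "\<And>x. t < x \<Longrightarrow> x < x0 \<Longrightarrow> u differentiable (at x)"
    using du t x0 unfolding real_differentiable_def
    by (metis greaterThanAtMost_iff greaterThanLessThan_iff le_less_trans less_eq_real_def x0)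
  ultimately obtain l y where y: "t < y" "y < x0" "DERIV u y :> l" "u x0 - u t = (x0 - t) * l"
    using MVT[of t x0 u] t by auto
  have "y \<in> {a<..<b}" using y t x0 by auto
  then have "l = u' y" using du[of y] y(3) DERIV_unique by blast
  then have "u x0 - u t < 0" using y(4) neg[of y] y t by (simp add: mult_pos_neg)
  moreover have "u t \<le> u x0" using max[of t] t x0 by auto
  ultimately show False by linarith
qed

lemma dirichlet_neumann_max_principle:
  fixes u u' u'' :: "real \<Rightarrow> real"
  assumes ab: "a < b" and u: "has_derivs2_on a b u u' u''"
    and convex: "\<And>x. x \<in> {a<..<b} \<Longrightarrow> u x > 0 \<Longrightarrow> u'' x > 0"
    and ua: "u a \<le> 0" and ub: "u' b \<le> 0"
    and x: "x \<in> {a..b}"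
  shows "u x \<le> 0"
proof (rule ccontr)
  assume "\<not> u x \<le> 0"
  obtain x0 where x0: "x0 \<in> {a..b}" "\<And>y. y \<in> {a..b} \<Longrightarrow> u y \<le> u x0"
    using continuous_attains_sup[OF compact_Icc _ has_derivs2_onD(1)[OF u]] ab by fastforce
  have u0: "u x0 > 0" using x0(2)[OF x] \<open>\<not> u x \<le> 0\<close> by linarith
  then have x0': "x0 \<in> {a<..b}" using x0 ua by (cases "x0 = a") auto
  have "u' x0 \<le> 0"
  proof (cases "x0 = b")
    case False
    then have "x0 \<in> {a<..<b}" using x0' by auto
    then have "u' x0 = 0"
      using x0(2)
      by (intro DERIV_local_max[OF has_derivs2_onD(3)[OF u], of x0 "min (x0 - a) (b - x0)"])
         (auto simp: dist_real_def abs_if split: if_splits)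
    then show ?thesis by simp
  qed (use ub in simp)
  then show False using positive_max_imp_slope_pos[OF u convex x0' u0 x0(2)] by simp
qed

lemma dirichlet_neumann_comparison:
  fixes y y' y'' z z' z'' :: "real \<Rightarrow> real"
  assumes "a < b" and y: "has_derivs2_on a b y y' y''" and z: "has_derivs2_on a b z z' z''"
    and "\<And>x. x \<in> {a<..<b} \<Longrightarrow> z x < y x \<Longrightarrow> z'' x < y'' x"
    and "y a \<le> z a" and "y' b \<le> z' b" and "x \<in> {a..b}"
  shows "y x \<le> z x"
  using dirichlet_neumann_max_principle[OF \<open>a < b\<close> has_derivs2_on_diff[OF y z]] assms(4-) by simp

section \<open>The linear problem\<close>

definition sinh_integral :: "real \<Rightarrow> real \<Rightarrow> (real \<Rightarrow> real) \<Rightarrow> real \<Rightarrow> real" where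
  "sinh_integral a lam k s = integral {a..s} (\<lambda>t. sinh (lam * (t - a)) * k t)"

definition cosh_integral :: "real \<Rightarrow> real \<Rightarrow> (real \<Rightarrow> real) \<Rightarrow> real \<Rightarrow> real" where
  "cosh_integral b lam k s = integral {s..b} (\<lambda>t. cosh (lam * (b - t)) * k t)"

text \<open>Variation of constants for \<open>-eps * y'' + eps * lam\<^sup>2 * y = k\<close>, \<open>y a = 0\<close>, \<open>y' b = eps\<close>:
  \<open>sinh (lam * (s - a))\<close> and \<open>cosh (lam * (b - s))\<close> solve the homogeneous equation with the
  respective boundary condition.\<close>
definition linear_sol :: "real \<Rightarrow> real \<Rightarrow> real \<Rightarrow> real \<Rightarrow> (real \<Rightarrow> real) \<Rightarrow> real \<Rightarrow> real" where
  "linear_sol a b lam eps k s =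
     (cosh (lam * (b - s)) * sinh_integral a lam k s + sinh (lam * (s - a)) * cosh_integral b lam k s)
       / (eps * lam * cosh (lam * (b - a)))
     + eps * sinh (lam * (s - a)) / (lam * cosh (lam * (b - a)))"

definition linear_sol' :: "real \<Rightarrow> real \<Rightarrow> real \<Rightarrow> real \<Rightarrow> (real \<Rightarrow> real) \<Rightarrow> real \<Rightarrow> real" where
  "linear_sol' a b lam eps k s =
     (- lam * sinh (lam * (b - s)) * sinh_integral a lam k s + lam * cosh (lam * (s - a)) * cosh_integral b lam k s)
       / (eps * lam * cosh (lam * (b - a)))
     + eps * lam * cosh (lam * (s - a)) / (lam * cosh (lam * (b - a)))"

lemma has_real_derivative_sinh_integral:
  assumes "continuous_on {a..b} k" "s \<in> {a..b}"
  shows "(sinh_integral a lam k has_real_derivative sinh (lam * (s - a)) * k s) (at s within {a..b})"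
  unfolding sinh_integral_def
  by (rule integral_has_real_derivative[OF _ assms(2)]) (intro continuous_intros assms(1))

lemma has_real_derivative_cosh_integral:
  assumes "continuous_on {a..b} k" "s \<in> {a..b}"
  shows "(cosh_integral b lam k has_real_derivative - (cosh (lam * (b - s)) * k s)) (at s within {a..b})"
  unfolding cosh_integral_def
  by (rule integral_has_real_derivative'[OF _ assms(2)]) (intro continuous_intros assms(1))

lemma linear_sol_has_derivative:
  assumes "continuous_on {a..b} k" "s \<in> {a<..<b}" "lam > 0" "eps > 0"
  shows "(linear_sol a b lam eps k has_real_derivative linear_sol' a b lam eps k s) (at s)"
proof -
  have s: "s \<in> {a..b}" and at: "at s within {a..b} = at s"
    using assms(2) by (auto intro: at_within_interior)
  note d1 = has_real_derivative_sinh_integral[OF assms(1) s, of lam, unfolded at]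
    and d2 = has_real_derivative_cosh_integral[OF assms(1) s, of lam, unfolded at]
  show ?thesis unfolding linear_sol_def linear_sol'_def
    using assms(3,4) by (auto intro!: derivative_eq_intros d1 d2 simp: field_simps)
qed

lemma linear_sol'_has_derivative:
  assumes "continuous_on {a..b} k" "s \<in> {a<..<b}" "lam > 0" "eps > 0"
  shows "(linear_sol' a b lam eps k has_real_derivative lam\<^sup>2 * linear_sol a b lam eps k s - k s / eps) (at s)"
proof -
  have s: "s \<in> {a..b}" and at: "at s within {a..b} = at s"
    using assms(2) by (auto intro: at_within_interior)
  note d1 = has_real_derivative_sinh_integral[OF assms(1) s, of lam, unfolded at]
    and d2 = has_real_derivative_cosh_integral[OF assms(1) s, of lam, unfolded at]
  define I1 where "I1 = sinh_integral a lam k s"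
  define I2 where "I2 = cosh_integral b lam k s"
  define W where "W = eps * lam * cosh (lam * (b - a))"
  have W: "W > 0" using assms(3,4) by (simp add: W_def)
  have wronskian: "cosh (lam * (s - a)) * cosh (lam * (b - s)) + sinh (lam * (s - a)) * sinh (lam * (b - s))
      = cosh (lam * (b - a))"
    using cosh_add[of "lam * (s - a)" "lam * (b - s)"] by (simp add: algebra_simps)
  have "(linear_sol' a b lam eps k has_real_derivative
     (lam * lam * cosh (lam * (b - s)) * I1 - lam * sinh (lam * (b - s)) * (sinh (lam * (s - a)) * k s)
      + lam * lam * sinh (lam * (s - a)) * I2 - lam * cosh (lam * (s - a)) * (cosh (lam * (b - s)) * k s)) / W
      + eps * lam * lam * sinh (lam * (s - a)) / (lam * cosh (lam * (b - a)))) (at s)"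
    unfolding linear_sol'_def I1_def I2_def W_def using assms(3,4)
    by (auto intro!: derivative_eq_intros d1 d2 simp: field_simps)
  also have "(lam * lam * cosh (lam * (b - s)) * I1 - lam * sinh (lam * (b - s)) * (sinh (lam * (s - a)) * k s)
      + lam * lam * sinh (lam * (s - a)) * I2 - lam * cosh (lam * (s - a)) * (cosh (lam * (b - s)) * k s)) / W
      + eps * lam * lam * sinh (lam * (s - a)) / (lam * cosh (lam * (b - a)))
    = lam\<^sup>2 * linear_sol a b lam eps k s
      - k s * (lam * (cosh (lam * (s - a)) * cosh (lam * (b - s)) + sinh (lam * (s - a)) * sinh (lam * (b - s)))) / W"
    unfolding linear_sol_def I1_def[symmetric] I2_def[symmetric] W_def[symmetric]
    using W assms(3,4) by (simp add: W_def field_simps power2_eq_square)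
  also have "\<dots> = lam\<^sup>2 * linear_sol a b lam eps k s - k s / eps"
    unfolding wronskian using assms(3,4) by (simp add: W_def)
  finally show ?thesis .
qed

lemma linear_sol_left: "linear_sol a b lam eps k a = 0"
  by (simp add: linear_sol_def sinh_integral_def)

lemma linear_sol'_right: "lam \<noteq> 0 \<Longrightarrow> linear_sol' a b lam eps k b = eps"
  by (simp add: linear_sol'_def cosh_integral_def)

lemma continuous_on_linear_sol:
  assumes "(\<lambda>t. sinh (lam * (t - a)) * k t) integrable_on {a..b}"
    and "(\<lambda>t. cosh (lam * (b - t)) * k t) integrable_on {a..b}"
    and "lam > 0" "eps > 0"
  shows "continuous_on {a..b} (linear_sol a b lam eps k)" "continuous_on {a..b} (linear_sol' a b lam eps k)"
proof -
  have "continuous_on {a..b} (sinh_integral a lam k)" "continuous_on {a..b} (cosh_integral b lam k)"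
    unfolding sinh_integral_def cosh_integral_def
    by (intro indefinite_integral_continuous_1 indefinite_integral_continuous_1' assms(1,2))+
  then show "continuous_on {a..b} (linear_sol a b lam eps k)" "continuous_on {a..b} (linear_sol' a b lam eps k)"
    unfolding linear_sol_def linear_sol'_def using assms(3,4) by (auto intro!: continuous_intros)
qed

lemma linear_sol_derivs2:
  assumes "continuous_on {a..b} k" "lam > 0" "eps > 0"
  shows "has_derivs2_on a b (linear_sol a b lam eps k) (linear_sol' a b lam eps k)
           (\<lambda>x. lam\<^sup>2 * linear_sol a b lam eps k x - k x / eps)"
proof (rule has_derivs2_onI)
  have "(\<lambda>t. sinh (lam * (t - a)) * k t) integrable_on {a..b}" "(\<lambda>t. cosh (lam * (b - t)) * k t) integrable_on {a..b}"
    by (intro integrable_continuous_interval continuous_intros assms(1))+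
  then show "continuous_on {a..b} (linear_sol a b lam eps k)" "continuous_on {a..b} (linear_sol' a b lam eps k)"
    using continuous_on_linear_sol assms(2,3) by blast+
qed (use linear_sol_has_derivative linear_sol'_has_derivative assms in auto)

lemma linear_sol_tendsto:
  assumes "lam > 0" "eps > 0" and kc: "\<And>j. continuous_on {a..b} (k j)"
    and kb: "\<And>j t. t \<in> {a..b} \<Longrightarrow> \<bar>k j t\<bar> \<le> M"
    and kl: "\<And>t. t \<in> {a..b} \<Longrightarrow> (\<lambda>j. k j t) \<longlonglongrightarrow> k_lim t"
  shows "(\<lambda>t. sinh (lam * (t - a)) * k_lim t) integrable_on {a..b}"
    and "(\<lambda>t. cosh (lam * (b - t)) * k_lim t) integrable_on {a..b}"
    and "\<And>s. s \<in> {a..b} \<Longrightarrow> (\<lambda>j. linear_sol a b lam eps (k j) s) \<longlonglongrightarrow> linear_sol a b lam eps k_lim s"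
proof -
  have dominated: "(\<lambda>t. g t * k_lim t) integrable_on {c..d} \<and>
     (\<lambda>j. integral {c..d} (\<lambda>t. g t * k j t)) \<longlonglongrightarrow> integral {c..d} (\<lambda>t. g t * k_lim t)"
    if g: "continuous_on {a..b} g" and cd: "a \<le> c" "d \<le> b" for g c d
  proof -
    have sub: "{c..d} \<subseteq> {a..b}" using cd by auto
    note gc = continuous_on_subset[OF g sub] and kc' = continuous_on_subset[OF kc sub]
    have "(\<lambda>t. g t * k j t) integrable_on {c..d}" for j
      by (intro integrable_continuous_interval continuous_intros gc kc')
    moreover have "(\<lambda>t. \<bar>g t\<bar> * M) integrable_on {c..d}"
      by (intro integrable_continuous_interval continuous_intros gc)
    moreover have "norm (g t * k j t) \<le> \<bar>g t\<bar> * M" if "t \<in> {c..d}" for j t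
      using kb[of t j] that sub by (auto simp: abs_mult intro: mult_left_mono)
    moreover have "(\<lambda>j. g t * k j t) \<longlonglongrightarrow> g t * k_lim t" if "t \<in> {c..d}" for t
      using kl[of t] that sub by (auto intro: tendsto_intros)
    ultimately show ?thesis
      using dominated_convergence[of "\<lambda>j t. g t * k j t" "{c..d}" "\<lambda>t. \<bar>g t\<bar> * M" "\<lambda>t. g t * k_lim t"]
      by blast
  qed
  have g1: "continuous_on {a..b} (\<lambda>t. sinh (lam * (t - a)))"
    and g2: "continuous_on {a..b} (\<lambda>t. cosh (lam * (b - t)))" by (intro continuous_intros)+
  show "(\<lambda>t. sinh (lam * (t - a)) * k_lim t) integrable_on {a..b}"
    and "(\<lambda>t. cosh (lam * (b - t)) * k_lim t) integrable_on {a..b}"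
    using dominated[OF g1 order_refl order_refl] dominated[OF g2 order_refl order_refl] by blast+
  fix s assume s: "s \<in> {a..b}"
  have "(\<lambda>j. sinh_integral a lam (k j) s) \<longlonglongrightarrow> sinh_integral a lam k_lim s"
    "(\<lambda>j. cosh_integral b lam (k j) s) \<longlonglongrightarrow> cosh_integral b lam k_lim s"
    unfolding sinh_integral_def cosh_integral_def
    using dominated[OF g1 order_refl, of s] dominated[OF g2 _ order_refl, of s] s by auto
  then show "(\<lambda>j. linear_sol a b lam eps (k j) s) \<longlonglongrightarrow> linear_sol a b lam eps k_lim s"
    unfolding linear_sol_def using assms(1,2) by (intro tendsto_intros) auto
qed

lemma linear_sol_le_supersolution:
  assumes "a < b" "lam > 0" "eps > 0" "continuous_on {a..b} k"
    and Z: "has_derivs2_on a b Z Z' Z''" and "0 \<le> Z a" "eps \<le> Z' b"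
    and super: "\<And>x. x \<in> {a<..<b} \<Longrightarrow> Z x < linear_sol a b lam eps k x \<Longrightarrow>
                  k x \<le> eps * lam\<^sup>2 * Z x - eps * Z'' x"
    and "x \<in> {a..b}"
  shows "linear_sol a b lam eps k x \<le> Z x"
proof (rule dirichlet_neumann_comparison[OF \<open>a < b\<close> linear_sol_derivs2[OF assms(4,2,3)] Z])
  show "Z'' x < lam\<^sup>2 * linear_sol a b lam eps k x - k x / eps"
    if "x \<in> {a<..<b}" "Z x < linear_sol a b lam eps k x" for x
  proof -
    have "eps * Z'' x \<le> eps * (lam\<^sup>2 * Z x) - k x" using super[OF that] by (simp add: algebra_simps)
    also have "\<dots> < eps * (lam\<^sup>2 * linear_sol a b lam eps k x) - k x"
      using that(2) assms(2,3) by simp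
    finally show ?thesis using assms(3) by (simp add: field_simps)
  qed
qed (use assms linear_sol_left linear_sol'_right in auto)

lemma linear_sol_nonneg:
  assumes "a < b" "lam > 0" "eps > 0" "continuous_on {a..b} k"
    and "\<And>x. x \<in> {a..b} \<Longrightarrow> 0 \<le> k x" and "x \<in> {a..b}"
  shows "0 \<le> linear_sol a b lam eps k x"
proof (rule dirichlet_neumann_comparison[OF \<open>a < b\<close> _ linear_sol_derivs2[OF assms(4,2,3)]])
  show "has_derivs2_on a b (\<lambda>_. 0) (\<lambda>_. 0) (\<lambda>_. 0)" by (rule has_derivs2_onI) auto
  show "lam\<^sup>2 * linear_sol a b lam eps k x - k x / eps < 0"
    if "x \<in> {a<..<b}" "linear_sol a b lam eps k x < 0" for x
  proof -
    have "lam\<^sup>2 * linear_sol a b lam eps k x < 0" using that(2) assms(2) by (simp add: mult_pos_neg)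
    moreover have "0 \<le> k x / eps" using that(1) assms(3,5) by simp
    ultimately show ?thesis by linarith
  qed
qed (use assms linear_sol_left linear_sol'_right in auto)

lemma linear_sol_mono:
  assumes "a < b" "lam > 0" "eps > 0" "continuous_on {a..b} k1" "continuous_on {a..b} k2"
    and "\<And>x. x \<in> {a..b} \<Longrightarrow> k1 x \<le> k2 x" and "x \<in> {a..b}"
  shows "linear_sol a b lam eps k1 x \<le> linear_sol a b lam eps k2 x"
  using assms
  by (intro linear_sol_le_supersolution[OF assms(1-4) linear_sol_derivs2[OF assms(5,2,3)]])
     (auto simp: linear_sol_left linear_sol'_right field_simps)

section \<open>Monotone iteration\<close>

lemma power_diff_le:
  fixes x y B :: real
  assumes "0 \<le> x" "x \<le> y" "y \<le> B"
  shows "y ^ n - x ^ n \<le> real n * B ^ (n - 1) * (y - x)"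
proof -
  have "(\<Sum>i<n. x ^ (n - Suc i) * y ^ i) \<le> (\<Sum>i<n. B ^ (n - 1))"
  proof (rule sum_mono)
    fix i assume i: "i \<in> {..<n}"
    have "x ^ (n - Suc i) * y ^ i \<le> B ^ (n - Suc i) * B ^ i"
      using assms by (intro mult_mono power_mono) auto
    also have "\<dots> = B ^ (n - 1)" using i by (simp add: power_add[symmetric])
    finally show "x ^ (n - Suc i) * y ^ i \<le> B ^ (n - 1)" .
  qed
  then have "(y - x) * (\<Sum>i<n. x ^ (n - Suc i) * y ^ i) \<le> (y - x) * (real n * B ^ (n - 1))"
    using assms by (intro mult_left_mono) auto
  then show ?thesis by (simp add: power_diff_sumr2 algebra_simps)
qed

lemma linear_minus_power_mono:
  fixes x y B q qM mu :: real
  assumes "0 \<le> x" "x \<le> y" "y \<le> B" "0 \<le> q" "q \<le> qM" "real n * qM * B ^ (n - 1) \<le> mu"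
  shows "mu * x - q * x ^ n \<le> mu * y - q * y ^ n"
proof -
  have "q * (y ^ n - x ^ n) \<le> qM * (real n * B ^ (n - 1) * (y - x))"
    using power_diff_le[OF assms(1-3), of n] assms by (intro mult_mono) (auto simp: power_mono)
  also have "\<dots> = real n * qM * B ^ (n - 1) * (y - x)" by simp
  also have "\<dots> \<le> mu * (y - x)" using assms by (intro mult_right_mono) auto
  finally show ?thesis by (simp add: algebra_simps)
qed

text \<open>Adding \<open>mu * y\<close> to both sides turns \<open>eps * y'' = q * y ^ n - l\<close> into
  \<open>-eps * y'' + mu * y = shifted_rhs n mu q l y\<close>, whose right-hand side is monotone in \<open>y\<close> on
  \<open>[0, B]\<close> once \<open>mu \<ge> n * max q * B ^ (n - 1)\<close>.\<close>
definition shifted_rhs :: "nat \<Rightarrow> real \<Rightarrow> (real \<Rightarrow> real) \<Rightarrow> (real \<Rightarrow> real) \<Rightarrow> (real \<Rightarrow> real) \<Rightarrow> real \<Rightarrow> real"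
  where "shifted_rhs n mu q l g x = l x + mu * g x - q x * g x ^ n"

lemma continuous_on_shifted_rhs:
  "continuous_on S q \<Longrightarrow> continuous_on S l \<Longrightarrow> continuous_on S g \<Longrightarrow> continuous_on S (shifted_rhs n mu q l g)"
  unfolding shifted_rhs_def by (intro continuous_intros)

lemma linear_sol_shifted_rhs_bounds:
  assumes "a < b" "lam > 0" "eps > 0" "n > 0" and mu: "mu = eps * lam\<^sup>2"
    and qc: "continuous_on {a..b} q" and lc: "continuous_on {a..b} l" and gc: "continuous_on {a..b} g"
    and q: "\<And>x. x \<in> {a..b} \<Longrightarrow> 0 < q x \<and> q x \<le> qM" and l: "\<And>x. x \<in> {a..b} \<Longrightarrow> 0 \<le> l x"
    and Z: "has_derivs2_on a b Z Z' Z''" "eps \<le> Z' b"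
    and super: "\<And>x. x \<in> {a<..<b} \<Longrightarrow> l x \<le> q x * Z x ^ n - eps * Z'' x"
    and g: "\<And>x. x \<in> {a..b} \<Longrightarrow> 0 \<le> g x \<and> g x \<le> Z x \<and> Z x \<le> B"
    and muB: "real n * qM * B ^ (n - 1) \<le> mu"
    and x: "x \<in> {a..b}"
  shows "0 \<le> linear_sol a b lam eps (shifted_rhs n mu q l g) x"
    and "linear_sol a b lam eps (shifted_rhs n mu q l g) x \<le> Z x"
proof -
  have kc: "continuous_on {a..b} (shifted_rhs n mu q l g)"
    using qc lc gc by (rule continuous_on_shifted_rhs)
  have mono: "mu * x - q y * x ^ n \<le> mu * z - q y * z ^ n" if "y \<in> {a..b}" "0 \<le> x" "x \<le> z" "z \<le> B" for x y z
    using linear_minus_power_mono[OF that(2-4) _ _ muB] q[OF that(1)] by auto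
  show "0 \<le> linear_sol a b lam eps (shifted_rhs n mu q l g) x"
  proof (rule linear_sol_nonneg[OF assms(1-3) kc _ x])
    show "0 \<le> shifted_rhs n mu q l g y" if "y \<in> {a..b}" for y
      using mono[OF that order_refl, of "g y"] g[OF that] l[OF that] \<open>n > 0\<close>
      by (simp add: shifted_rhs_def zero_power)
  qed
  show "linear_sol a b lam eps (shifted_rhs n mu q l g) x \<le> Z x"
  proof (rule linear_sol_le_supersolution[OF assms(1-3) kc Z(1) _ Z(2) _ x])
    show "0 \<le> Z a" using g[of a] \<open>a < b\<close> by auto
    show "shifted_rhs n mu q l g y \<le> eps * lam\<^sup>2 * Z y - eps * Z'' y" if "y \<in> {a<..<b}" for y
      using mono[of y "g y" "Z y"] g[of y] super[OF that] that
      by (auto simp: shifted_rhs_def mu)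
  qed
qed

lemma linear_sol_shifted_rhs_mono:
  assumes "a < b" "lam > 0" "eps > 0"
    and qc: "continuous_on {a..b} q" and lc: "continuous_on {a..b} l"
    and "continuous_on {a..b} g1" "continuous_on {a..b} g2"
    and q: "\<And>x. x \<in> {a..b} \<Longrightarrow> 0 < q x \<and> q x \<le> qM" and muB: "real n * qM * B ^ (n - 1) \<le> mu"
    and g: "\<And>x. x \<in> {a..b} \<Longrightarrow> 0 \<le> g1 x \<and> g1 x \<le> g2 x \<and> g2 x \<le> B" and x: "x \<in> {a..b}"
  shows "linear_sol a b lam eps (shifted_rhs n mu q l g1) x \<le> linear_sol a b lam eps (shifted_rhs n mu q l g2) x"
proof (rule linear_sol_mono[OF assms(1-3) continuous_on_shifted_rhs[OF qc lc assms(6)]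
      continuous_on_shifted_rhs[OF qc lc assms(7)] _ x])
  show "shifted_rhs n mu q l g1 y \<le> shifted_rhs n mu q l g2 y" if "y \<in> {a..b}" for y
    using linear_minus_power_mono[of "g1 y" "g2 y" B "q y" qM n mu] g[OF that] q[OF that] muB
    by (auto simp: shifted_rhs_def)
qed

lemma linear_sol_iteration_limit:
  assumes "lam > 0" "eps > 0"
    and qc: "continuous_on {a..b} q" and lc: "continuous_on {a..b} l"
    and uc: "\<And>j. continuous_on {a..b} (u j)"
    and uSuc: "\<And>j x. x \<in> {a..b} \<Longrightarrow> u (Suc j) x = linear_sol a b lam eps (shifted_rhs n mu q l (u j)) x"
    and ub: "\<And>j x. x \<in> {a..b} \<Longrightarrow> \<bar>u j x\<bar> \<le> B"
    and lim: "\<And>x. x \<in> {a..b} \<Longrightarrow> (\<lambda>j. u j x) \<longlonglongrightarrow> U x"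
  shows "continuous_on {a..b} U"
    and "\<And>x. x \<in> {a..b} \<Longrightarrow> U x = linear_sol a b lam eps (shifted_rhs n mu q l U) x"
proof -
  obtain Mq Ml where Mq: "\<And>x. x \<in> {a..b} \<Longrightarrow> \<bar>q x\<bar> \<le> Mq" and Ml: "\<And>x. x \<in> {a..b} \<Longrightarrow> \<bar>l x\<bar> \<le> Ml"
    using compact_continuous_image[OF qc compact_Icc] compact_continuous_image[OF lc compact_Icc]
    by (metis compact_imp_bounded bounded_real imageI)
  have bound: "\<bar>shifted_rhs n mu q l (u j) x\<bar> \<le> Ml + \<bar>mu\<bar> * B + Mq * B ^ n" if x: "x \<in> {a..b}" for j x
  proof -
    have "\<bar>u j x\<bar> ^ n \<le> B ^ n" using ub[OF x] by (intro power_mono) auto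
    then have "\<bar>q x * u j x ^ n\<bar> \<le> Mq * B ^ n"
      using Mq[OF x] by (auto simp: abs_mult power_abs intro: mult_mono)
    moreover have "\<bar>mu * u j x\<bar> \<le> \<bar>mu\<bar> * B" using ub[OF x] by (simp add: abs_mult mult_left_mono)
    ultimately show ?thesis using Ml[OF x] by (simp add: shifted_rhs_def abs_le_iff)
  qed
  have rhs_lim: "(\<lambda>j. shifted_rhs n mu q l (u j) x) \<longlonglongrightarrow> shifted_rhs n mu q l U x" if "x \<in> {a..b}" for x
    unfolding shifted_rhs_def by (intro tendsto_intros lim[OF that])
  note dominated = linear_sol_tendsto[where k = "\<lambda>j. shifted_rhs n mu q l (u j)"
      and k_lim = "shifted_rhs n mu q l U", OF assms(1,2) continuous_on_shifted_rhs[OF qc lc uc] bound rhs_lim]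
  have integrable: "(\<lambda>t. sinh (lam * (t - a)) * shifted_rhs n mu q l U t) integrable_on {a..b}"
      "(\<lambda>t. cosh (lam * (b - t)) * shifted_rhs n mu q l U t) integrable_on {a..b}"
    and sol_lim: "\<And>x. x \<in> {a..b} \<Longrightarrow>
      (\<lambda>j. linear_sol a b lam eps (shifted_rhs n mu q l (u j)) x) \<longlonglongrightarrow> linear_sol a b lam eps (shifted_rhs n mu q l U) x"
    by (rule dominated; simp)+
  show fixed_point: "U x = linear_sol a b lam eps (shifted_rhs n mu q l U) x" if x: "x \<in> {a..b}" for x
  proof (rule LIMSEQ_unique)
    show "(\<lambda>j. u (Suc j) x) \<longlonglongrightarrow> U x" using lim[OF x] by (rule LIMSEQ_Suc)
    show "(\<lambda>j. u (Suc j) x) \<longlonglongrightarrow> linear_sol a b lam eps (shifted_rhs n mu q l U) x"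
      unfolding uSuc[OF x] by (rule sol_lim[OF x])
  qed
  show "continuous_on {a..b} U"
    using continuous_on_eq[OF continuous_on_linear_sol(1)[OF integrable assms(1,2)]] fixed_point
    by auto
qed

lemma linear_sol_fixed_point_derivs2:
  assumes "lam > 0" "eps > 0" "mu = eps * lam\<^sup>2"
    and qc: "continuous_on {a..b} q" and lc: "continuous_on {a..b} l" and Uc: "continuous_on {a..b} U"
    and fixed: "\<And>x. x \<in> {a..b} \<Longrightarrow> U x = linear_sol a b lam eps (shifted_rhs n mu q l U) x"
  defines "y \<equiv> linear_sol a b lam eps (shifted_rhs n mu q l U)"
  shows "has_derivs2_on a b y (linear_sol' a b lam eps (shifted_rhs n mu q l U)) (\<lambda>x. (q x * y x ^ n - l x) / eps)"
proof (rule has_derivs2_on_cong)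
  show "has_derivs2_on a b y (linear_sol' a b lam eps (shifted_rhs n mu q l U))
          (\<lambda>x. lam\<^sup>2 * y x - shifted_rhs n mu q l U x / eps)"
    unfolding y_def by (intro linear_sol_derivs2 continuous_on_shifted_rhs qc lc Uc assms(1,2))
  show "lam\<^sup>2 * y x - shifted_rhs n mu q l U x / eps = (q x * y x ^ n - l x) / eps"
    if "x \<in> {a<..<b}" for x
    using fixed[of x] that assms(2,3) by (auto simp: y_def shifted_rhs_def field_simps)
qed

lemma dirichlet_neumann_solution_below_supersolution:
  fixes q l Z Z' Z'' :: "real \<Rightarrow> real"
  assumes ab: "a < b" and eps: "eps > 0" and n: "n > 0"
    and qc: "continuous_on {a..b} q" and lc: "continuous_on {a..b} l"
    and q: "\<And>x. x \<in> {a..b} \<Longrightarrow> 0 < q x" and l: "\<And>x. x \<in> {a..b} \<Longrightarrow> 0 \<le> l x"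
    and Z: "has_derivs2_on a b Z Z' Z''" "\<And>x. x \<in> {a..b} \<Longrightarrow> 0 \<le> Z x" "eps \<le> Z' b"
    and super: "\<And>x. x \<in> {a<..<b} \<Longrightarrow> l x \<le> q x * Z x ^ n - eps * Z'' x"
  shows "\<exists>y y'. has_derivs2_on a b y y' (\<lambda>x. (q x * y x ^ n - l x) / eps)
                \<and> y a = 0 \<and> y' b = eps \<and> (\<forall>x\<in>{a..b}. 0 \<le> y x \<and> y x \<le> Z x)"
proof -
  obtain B qM where B: "\<And>x. x \<in> {a..b} \<Longrightarrow> Z x \<le> B" and qM: "\<And>x. x \<in> {a..b} \<Longrightarrow> q x \<le> qM"
    using compact_continuous_image[OF has_derivs2_onD(1)[OF Z(1)] compact_Icc]
      compact_continuous_image[OF qc compact_Icc]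
    by (metis compact_imp_bounded bounded_real imageI abs_le_D1)
  define mu where "mu = max 1 (real n * qM * B ^ (n - 1))"
  define lam where "lam = sqrt (mu / eps)"
  have lam: "lam > 0" "mu = eps * lam\<^sup>2" using eps by (auto simp: lam_def mu_def)
  have muB: "real n * qM * B ^ (n - 1) \<le> mu" by (simp add: mu_def)
  define T where "T g = linear_sol a b lam eps (shifted_rhs n mu q l g)" for g
  have T_cont: "continuous_on {a..b} (T g)" if "continuous_on {a..b} g" for g
    unfolding T_def
    by (rule has_derivs2_onD(1)[OF linear_sol_derivs2[OF continuous_on_shifted_rhs[OF qc lc that] lam(1) eps]])
  have T_bounds: "0 \<le> T g x \<and> T g x \<le> Z x"
    if "continuous_on {a..b} g" "\<And>x. x \<in> {a..b} \<Longrightarrow> 0 \<le> g x \<and> g x \<le> Z x" "x \<in> {a..b}" for g x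
    using linear_sol_shifted_rhs_bounds[OF ab lam(1) eps n lam(2) qc lc that(1) _ l Z(1) Z(3) super _ muB that(3)]
      q qM that(2) B unfolding T_def by blast
  define u where "u = rec_nat (\<lambda>x. 0) (\<lambda>_. T)"
  have u0: "u 0 = (\<lambda>x. 0)" and uSuc: "u (Suc j) = T (u j)" for j by (simp_all add: u_def)
  have u_cont: "continuous_on {a..b} (u j)" for j
    by (induction j) (simp_all add: u0 uSuc T_cont)
  have u_bounds: "0 \<le> u j x \<and> u j x \<le> Z x" if "x \<in> {a..b}" for j x
    using that
  proof (induction j arbitrary: x)
    case (Suc j)
    show ?case using T_bounds[OF u_cont Suc.IH Suc.prems] by (simp add: uSuc)
  qed (simp add: u0 Z(2))
  have u_mono: "u j x \<le> u (Suc j) x" if "x \<in> {a..b}" for j x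
    using that
  proof (induction j arbitrary: x)
    case 0
    then show ?case using u_bounds[of x 1] by (simp add: u0)
  next
    case (Suc j)
    have "T (u j) x \<le> T (u (Suc j)) x" unfolding T_def
    proof (rule linear_sol_shifted_rhs_mono[OF ab lam(1) eps qc lc u_cont u_cont _ muB _ Suc.prems])
      show "0 < q y \<and> q y \<le> qM" if "y \<in> {a..b}" for y using q qM that by blast
      show "0 \<le> u j y \<and> u j y \<le> u (Suc j) y \<and> u (Suc j) y \<le> B" if "y \<in> {a..b}" for y
        using u_bounds[OF that, of j] u_bounds[OF that, of "Suc j"] Suc.IH[OF that] B[OF that] by auto
    qed
    then show ?case by (simp only: uSuc)
  qed
  define U where "U x = (SUP j. u j x)" for x
  have u_le_Z: "u j x \<le> Z x" if "x \<in> {a..b}" for j x using u_bounds[OF that] by simp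
  have U_lim: "(\<lambda>j. u j x) \<longlonglongrightarrow> U x" if "x \<in> {a..b}" for x
    unfolding U_def using u_mono[OF that] u_le_Z[OF that]
    by (intro LIMSEQ_incseq_SUP) (auto intro!: bdd_aboveI incseq_SucI)
  have U_bounds: "0 \<le> U x \<and> U x \<le> Z x" if "x \<in> {a..b}" for x
    using u_bounds[OF that] u_le_Z[OF that] unfolding U_def
    by (auto intro!: cSUP_least cSUP_upper2[where x = 0] bdd_aboveI)
  have u_abs: "\<bar>u j x\<bar> \<le> B" if "x \<in> {a..b}" for j x
    using u_bounds[OF that, of j] B[OF that] by simp
  have U_cont: "continuous_on {a..b} U" and U_fix: "\<And>x. x \<in> {a..b} \<Longrightarrow> U x = T U x"
    using linear_sol_iteration_limit[where n = n and mu = mu, OF lam(1) eps qc lc u_cont _ u_abs U_lim]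
    by (auto simp: uSuc T_def)
  show ?thesis
  proof (intro exI conjI ballI)
    show "has_derivs2_on a b (T U) (linear_sol' a b lam eps (shifted_rhs n mu q l U))
            (\<lambda>x. (q x * T U x ^ n - l x) / eps)"
      unfolding T_def by (rule linear_sol_fixed_point_derivs2[OF lam(1) eps lam(2) qc lc U_cont U_fix[unfolded T_def]])
    show "T U a = 0" by (simp add: T_def linear_sol_left)
    show "linear_sol' a b lam eps (shifted_rhs n mu q l U) b = eps" using lam(1) by (simp add: linear_sol'_right)
  qed (use U_fix U_bounds in auto)
qed

lemma dirichlet_neumann_comparison_nonlinear:
  fixes q l y y' Z Z' Z'' :: "real \<Rightarrow> real"
  assumes "a < b" "eps > 0" "n > 0" and q: "\<And>x. x \<in> {a..b} \<Longrightarrow> 0 < q x"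
    and y: "has_derivs2_on a b y y' (\<lambda>x. (q x * y x ^ n - l x) / eps)"
    and Z: "has_derivs2_on a b Z Z' Z''" "\<And>x. x \<in> {a..b} \<Longrightarrow> 0 \<le> Z x"
    and super: "\<And>x. x \<in> {a<..<b} \<Longrightarrow> l x \<le> q x * Z x ^ n - eps * Z'' x"
    and "y a \<le> Z a" "y' b \<le> Z' b" "x \<in> {a..b}"
  shows "y x \<le> Z x"
proof (rule dirichlet_neumann_comparison[OF \<open>a < b\<close> y Z(1)])
  show "Z'' x < (q x * y x ^ n - l x) / eps" if x: "x \<in> {a<..<b}" "Z x < y x" for x
  proof -
    have "Z x ^ n < y x ^ n" using x Z(2)[of x] \<open>n > 0\<close> by (intro power_strict_mono) auto
    then have "q x * Z x ^ n < q x * y x ^ n" using q[of x] x(1) by simp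
    then have "eps * Z'' x < q x * y x ^ n - l x" using super[OF x(1)] by simp
    then show ?thesis using \<open>eps > 0\<close> by (simp add: field_simps)
  qed
qed (use assms in auto)

section \<open>Barriers and the limit of truncated problems\<close>

definition barrier_exp :: "nat \<Rightarrow> real" where
  "barrier_exp n = real (n - 1) / real n"

text \<open>Under \<open>s = r ^ n / n\<close> the term \<open>s powr barrier_exp n\<close> is a multiple of \<open>r ^ (n - 1)\<close>, so
  barriers with arbitrarily small \<open>e\<close> force the radial solution to satisfy \<open>w' 0 = 0\<close>.\<close>
definition barrier :: "nat \<Rightarrow> real \<Rightarrow> real \<Rightarrow> real \<Rightarrow> real" where
  "barrier n e K s = e * s powr barrier_exp n + K * s"

definition barrier' :: "nat \<Rightarrow> real \<Rightarrow> real \<Rightarrow> real \<Rightarrow> real" where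
  "barrier' n e K s = e * barrier_exp n * s powr (barrier_exp n - 1) + K"

definition barrier'' :: "nat \<Rightarrow> real \<Rightarrow> real \<Rightarrow> real" where
  "barrier'' n e s = e * barrier_exp n * (barrier_exp n - 1) * s powr (barrier_exp n - 2)"

lemma barrier_exp_bounds: "n \<ge> 2 \<Longrightarrow> 0 < barrier_exp n \<and> barrier_exp n < 1"
  unfolding barrier_exp_def by (auto simp: field_simps)

lemma barrier_derivs2:
  assumes "0 < a"
  shows "has_derivs2_on a b (barrier n e K) (barrier' n e K) (barrier'' n e)"
proof -
  have d1: "(barrier n e K has_real_derivative barrier' n e K s) (at s)"
    and d2: "(barrier' n e K has_real_derivative barrier'' n e s) (at s)" if "s > 0" for s
    using that unfolding barrier_def barrier'_def barrier''_def
    by (auto intro!: derivative_eq_intros simp: diff_diff_eq[symmetric])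
  show ?thesis
  proof (rule has_derivs2_onI)
    show "continuous_on {a..b} (barrier n e K)" "continuous_on {a..b} (barrier' n e K)"
      using assms by (auto intro!: continuous_at_imp_continuous_on DERIV_continuous d1 d2)
  qed (use assms d1 d2 in auto)
qed

lemma barrier_nonneg: "0 \<le> e \<Longrightarrow> 0 \<le> K \<Longrightarrow> 0 \<le> s \<Longrightarrow> 0 \<le> barrier n e K s"
  unfolding barrier_def by simp

lemma barrier''_nonpos: "n \<ge> 2 \<Longrightarrow> 0 \<le> e \<Longrightarrow> barrier'' n e s \<le> 0"
  unfolding barrier''_def using barrier_exp_bounds[of n]
  by (intro mult_nonpos_nonneg mult_nonneg_nonpos) auto

lemma barrier'_ge: "0 \<le> e \<Longrightarrow> n \<ge> 2 \<Longrightarrow> K \<le> barrier' n e K s"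
  unfolding barrier'_def using barrier_exp_bounds[of n] by simp

lemma barrier_mono:
  "n \<ge> 2 \<Longrightarrow> 0 \<le> e \<Longrightarrow> 0 \<le> K \<Longrightarrow> 0 \<le> s \<Longrightarrow> s \<le> t \<Longrightarrow> barrier n e K s \<le> barrier n e K t"
  unfolding barrier_def using barrier_exp_bounds[of n]
  by (intro add_mono mult_left_mono powr_mono2) auto

lemma barrier_supersolution:
  assumes "n \<ge> 2" "0 \<le> e" "eps > 0" "l x \<le> q x * barrier n e K x ^ n"
  shows "l x \<le> q x * barrier n e K x ^ n - eps * barrier'' n e x"
proof -
  have "eps * barrier'' n e x \<le> 0"
    using assms(1-3) barrier''_nonpos[of n e x] by (simp add: mult_nonneg_nonpos)
  then show ?thesis using assms(4) by linarith
qed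

lemma truncated_problem_solution:
  fixes q l :: "real \<Rightarrow> real"
  assumes n: "n \<ge> 2" and eps: "eps > 0" and a: "0 < a" "a < b"
    and qc: "continuous_on {a..b} q" and lc: "continuous_on {a..b} l"
    and q: "\<And>s. s \<in> {a..b} \<Longrightarrow> 0 < q s" and l: "\<And>s. s \<in> {a..b} \<Longrightarrow> 0 \<le> l s"
    and K: "eps \<le> K" "\<And>s. s \<in> {a..b} \<Longrightarrow> l s \<le> q s * barrier n 1 K s ^ n"
  obtains y y' where "has_derivs2_on a b y y' (\<lambda>x. (q x * y x ^ n - l x) / eps)"
    and "y a = 0" and "y' b = eps" and "\<And>x. x \<in> {a..b} \<Longrightarrow> 0 \<le> y x"
proof -
  have "\<exists>y y'. has_derivs2_on a b y y' (\<lambda>x. (q x * y x ^ n - l x) / eps)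
                \<and> y a = 0 \<and> y' b = eps \<and> (\<forall>x\<in>{a..b}. 0 \<le> y x \<and> y x \<le> barrier n 1 K x)"
  proof (rule dirichlet_neumann_solution_below_supersolution[OF a(2) eps _ qc lc q l barrier_derivs2[OF a(1)]])
    show "0 \<le> barrier n 1 K x" if "x \<in> {a..b}" for x
      using that a K eps by (intro barrier_nonneg) auto
    show "eps \<le> barrier' n 1 K b" using barrier'_ge[OF _ n, of 1 K b] K by simp
    show "l x \<le> q x * barrier n 1 K x ^ n - eps * barrier'' n 1 x" if "x \<in> {a<..<b}" for x
      using that by (intro barrier_supersolution n eps K(2)) auto
  qed (use n in auto)
  then show ?thesis using that by blast
qed

lemma has_real_derivative_eq_minus_integral:
  assumes "continuous_on {s..b} g" and F: "\<And>t. t \<in> {s..b} \<Longrightarrow> F t = c - integral {t..b} g"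
    and t: "t \<in> {s..b}"
  shows "(F has_real_derivative g t) (at t within {s..b})"
proof -
  have "((\<lambda>t. c - integral {t..b} g) has_real_derivative 0 - (- g t)) (at t within {s..b})"
    by (intro derivative_intros integral_has_real_derivative'[OF assms(1) t])
  then have "((\<lambda>t. c - integral {t..b} g) has_real_derivative g t) (at t within {s..b})" by simp
  then show ?thesis
    by (rule has_field_derivative_transform_within[OF _ zero_less_one t]) (simp add: F)
qed

lemma bounded_solutions_derivative_limit:
  fixes Y Y' :: "nat \<Rightarrow> real \<Rightarrow> real"
  assumes "s \<le> b" "eps > 0" and qc: "continuous_on {s..b} q" and lc: "continuous_on {s..b} l"
    and Y: "\<And>k. has_derivs2_on s b (Y k) (Y' k) (\<lambda>x. (q x * Y k x ^ n - l x) / eps)" "\<And>k. Y' k b = eps"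
    and bound: "\<And>k x. x \<in> {s..b} \<Longrightarrow> \<bar>Y k x\<bar> \<le> B"
    and lim: "\<And>x. x \<in> {s..b} \<Longrightarrow> (\<lambda>k. Y k x) \<longlonglongrightarrow> W x"
  defines "h \<equiv> \<lambda>x. (q x * W x ^ n - l x) / eps"
  defines "G \<equiv> \<lambda>t. eps - integral {t..b} h"
  shows "h integrable_on {s..b}" and "\<And>t. t \<in> {s..b} \<Longrightarrow> (\<lambda>k. Y' k t) \<longlonglongrightarrow> G t"
    and "\<exists>C. \<forall>k. \<forall>t\<in>{s..b}. norm (Y' k t) \<le> C"
proof -
  define dom where "dom x = (\<bar>q x\<bar> * \<bar>B\<bar> ^ n + \<bar>l x\<bar>) / eps" for x
  have dom_int: "dom integrable_on {t..b}" if "t \<in> {s..b}" for t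
    using continuous_on_subset[OF qc] continuous_on_subset[OF lc] that \<open>eps > 0\<close>
    unfolding dom_def by (intro integrable_continuous_interval continuous_intros) auto
  define hk where "hk k x = (q x * Y k x ^ n - l x) / eps" for k x
  have hk_int: "(hk k has_integral (eps - Y' k t)) {t..b}" if "t \<in> {s..b}" for k t
    unfolding hk_def using has_derivs2_on_integrals(2)[OF Y(1) that] Y(2) by simp
  have hk_bound: "norm (hk k x) \<le> dom x" if "x \<in> {s..b}" for k x
  proof -
    have "\<bar>Y k x\<bar> ^ n \<le> \<bar>B\<bar> ^ n" using bound[OF that, of k] by (intro power_mono) auto
    then have "\<bar>q x * Y k x ^ n\<bar> \<le> \<bar>q x\<bar> * \<bar>B\<bar> ^ n" by (simp add: abs_mult power_abs mult_left_mono)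
    then have "\<bar>q x * Y k x ^ n - l x\<bar> \<le> \<bar>q x\<bar> * \<bar>B\<bar> ^ n + \<bar>l x\<bar>" by linarith
    from divide_right_mono[OF this, of eps] show ?thesis
      using \<open>eps > 0\<close> by (simp add: hk_def dom_def abs_divide)
  qed
  have h_lim: "\<And>t. t \<in> {s..b} \<Longrightarrow> (\<lambda>k. hk k t) \<longlonglongrightarrow> h t"
    unfolding hk_def h_def using \<open>eps > 0\<close> by (intro tendsto_intros lim) auto
  have h_dominated: "h integrable_on {t..b} \<and> (\<lambda>k. integral {t..b} (hk k)) \<longlonglongrightarrow> integral {t..b} h"
    if t: "t \<in> {s..b}" for t
  proof -
    have "norm (hk k x) \<le> dom x" "(\<lambda>k. hk k x) \<longlonglongrightarrow> h x" if "x \<in> {t..b}" for k x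
      using hk_bound[of x k] h_lim[of x] that t by auto
    then show ?thesis
      using dominated_convergence[of hk "{t..b}" dom h, OF has_integral_integrable[OF hk_int[OF t]] dom_int[OF t]] by blast
  qed
  have Y'_eq: "Y' k t = eps - integral {t..b} (hk k)" if "t \<in> {s..b}" for k t
    using integral_unique[OF hk_int[OF that]] by simp
  have Y'_lim: "(\<lambda>k. Y' k t) \<longlonglongrightarrow> G t" if "t \<in> {s..b}" for t
    unfolding Y'_eq[OF that] G_def using h_dominated[OF that] by (intro tendsto_diff tendsto_const) blast
  define C where "C = eps + integral {s..b} dom"
  have Y'_bound: "norm (Y' k t) \<le> C" if t: "t \<in> {s..b}" for k t
  proof -
    have "norm (integral {t..b} (hk k)) \<le> integral {t..b} dom"
      using hk_bound t
      by (intro integral_norm_bound_integral has_integral_integrable[OF hk_int[OF t]] dom_int[OF t]) auto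
    moreover have "integral {t..b} dom \<le> integral {s..b} dom"
      using \<open>eps > 0\<close> t \<open>s \<le> b\<close>
      by (intro integral_subset_le dom_int) (auto simp: dom_def)
    ultimately show ?thesis unfolding Y'_eq[OF t] C_def real_norm_def using \<open>eps > 0\<close> by arith
  qed
  show "h integrable_on {s..b}" using h_dominated[of s] \<open>s \<le> b\<close> by auto
  show "\<And>t. t \<in> {s..b} \<Longrightarrow> (\<lambda>k. Y' k t) \<longlonglongrightarrow> G t" by (rule Y'_lim)
  show "\<exists>C. \<forall>k. \<forall>t\<in>{s..b}. norm (Y' k t) \<le> C" using Y'_bound by blast
qed

lemma bounded_solutions_limit_integral_eqs:
  fixes Y Y' :: "nat \<Rightarrow> real \<Rightarrow> real"
  assumes "s \<le> b" "eps > 0" and qc: "continuous_on {s..b} q" and lc: "continuous_on {s..b} l"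
    and Y: "\<And>k. has_derivs2_on s b (Y k) (Y' k) (\<lambda>x. (q x * Y k x ^ n - l x) / eps)" "\<And>k. Y' k b = eps"
    and bound: "\<And>k x. x \<in> {s..b} \<Longrightarrow> \<bar>Y k x\<bar> \<le> B"
    and lim: "\<And>x. x \<in> {s..b} \<Longrightarrow> (\<lambda>k. Y k x) \<longlonglongrightarrow> W x"
  defines "h \<equiv> \<lambda>x. (q x * W x ^ n - l x) / eps"
  defines "G \<equiv> \<lambda>t. eps - integral {t..b} h"
  shows "h integrable_on {s..b}" and "G integrable_on {s..b}"
    and "\<And>t. t \<in> {s..b} \<Longrightarrow> W t = W b - integral {t..b} G"
proof -
  note derivative_limit = bounded_solutions_derivative_limit[OF assms(1-8), folded h_def G_def]
  obtain C where C: "\<And>k t. t \<in> {s..b} \<Longrightarrow> norm (Y' k t) \<le> C" using derivative_limit(3) by blast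
  have Y'_int: "(Y' k has_integral (Y k b - Y k t)) {t..b}" if "t \<in> {s..b}" for k t
    using has_derivs2_on_integrals(1)[OF Y(1) that] .
  have G_dominated: "G integrable_on {t..b} \<and> (\<lambda>k. integral {t..b} (Y' k)) \<longlonglongrightarrow> integral {t..b} G"
    if t: "t \<in> {s..b}" for t
  proof -
    have "norm (Y' k x) \<le> C" "(\<lambda>k. Y' k x) \<longlonglongrightarrow> G x" if "x \<in> {t..b}" for k x
      using C[of x k] derivative_limit(2)[of x] that t by (auto simp: G_def)
    then show ?thesis
      using dominated_convergence[of Y' "{t..b}" "\<lambda>_. C" G, OF has_integral_integrable[OF Y'_int[OF t]] integrable_const_ivl] by blast
  qed
  show "h integrable_on {s..b}" "G integrable_on {s..b}"
    using derivative_limit(1) G_dominated[of s] \<open>s \<le> b\<close> by auto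
  show "W t = W b - integral {t..b} G" if t: "t \<in> {s..b}" for t
  proof (rule LIMSEQ_unique)
    show "(\<lambda>k. Y k t) \<longlonglongrightarrow> W t" using lim[OF t] .
    have "(\<lambda>k. Y k b - integral {t..b} (Y' k)) \<longlonglongrightarrow> W b - integral {t..b} G"
      using t G_dominated[OF t] by (intro tendsto_diff lim) auto
    then show "(\<lambda>k. Y k t) \<longlonglongrightarrow> W b - integral {t..b} G"
      using integral_unique[OF Y'_int[OF t]] by simp
  qed
qed

lemma bounded_solutions_limit:
  fixes Y Y' :: "nat \<Rightarrow> real \<Rightarrow> real"
  assumes "s \<le> b" "eps > 0" and qc: "continuous_on {s..b} q" and lc: "continuous_on {s..b} l"
    and Y: "\<And>k. has_derivs2_on s b (Y k) (Y' k) (\<lambda>x. (q x * Y k x ^ n - l x) / eps)" "\<And>k. Y' k b = eps"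
    and bound: "\<And>k x. x \<in> {s..b} \<Longrightarrow> \<bar>Y k x\<bar> \<le> B"
    and lim: "\<And>x. x \<in> {s..b} \<Longrightarrow> (\<lambda>k. Y k x) \<longlonglongrightarrow> W x"
  defines "h \<equiv> \<lambda>x. (q x * W x ^ n - l x) / eps"
  defines "G \<equiv> \<lambda>t. eps - integral {t..b} h"
  shows "\<And>t. t \<in> {s..b} \<Longrightarrow> (W has_real_derivative G t) (at t within {s..b})"
    and "\<And>t. t \<in> {s..b} \<Longrightarrow> (G has_real_derivative h t) (at t within {s..b})"
proof -
  note eqs = bounded_solutions_limit_integral_eqs[OF assms(1-8), folded h_def G_def]
  have W_cont: "continuous_on {s..b} W"
  proof (rule continuous_on_eq)
    show "continuous_on {s..b} (\<lambda>t. W b - integral {t..b} G)"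
      by (intro continuous_on_diff continuous_on_const indefinite_integral_continuous_1' eqs(2))
  qed (rule eqs(3)[symmetric])
  have h_cont: "continuous_on {s..b} h"
    unfolding h_def using qc lc W_cont \<open>eps > 0\<close> by (intro continuous_intros) auto
  have G_cont: "continuous_on {s..b} G"
    unfolding G_def by (intro continuous_intros indefinite_integral_continuous_1' eqs(1))
  show "\<And>t. t \<in> {s..b} \<Longrightarrow> (W has_real_derivative G t) (at t within {s..b})"
    using has_real_derivative_eq_minus_integral[OF G_cont eqs(3)] by blast
  show "\<And>t. t \<in> {s..b} \<Longrightarrow> (G has_real_derivative h t) (at t within {s..b})"
    using has_real_derivative_eq_minus_integral[OF h_cont, of G eps] by (simp add: G_def)
qed

lemma monotone_approximations:
  fixes q l :: "real \<Rightarrow> real" and a :: "nat \<Rightarrow> real"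
  assumes n: "n \<ge> 2" and eps: "eps > 0"
    and qc: "continuous_on {0<..b} q" and lc: "continuous_on {0<..b} l"
    and q: "\<And>s. s \<in> {0<..b} \<Longrightarrow> 0 < q s" and l: "\<And>s. s \<in> {0<..b} \<Longrightarrow> 0 \<le> l s"
    and barriers: "\<And>e. e > 0 \<Longrightarrow> \<exists>K. eps \<le> K \<and> (\<forall>s\<in>{0<..b}. l s \<le> q s * barrier n e K s ^ n)"
    and a: "\<And>m. 0 < a m" "\<And>m. a m < b" "\<And>m. a (Suc m) \<le> a m"
  obtains Y Y' where "\<And>m. has_derivs2_on (a m) b (Y m) (Y' m) (\<lambda>x. (q x * Y m x ^ n - l x) / eps)"
    and "\<And>m. Y' m b = eps" and "\<And>m s. s \<in> {a m..b} \<Longrightarrow> 0 \<le> Y m s"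
    and "\<And>m s. s \<in> {a m..b} \<Longrightarrow> Y m s \<le> Y (Suc m) s"
    and "\<And>e. e > 0 \<Longrightarrow> \<exists>K\<ge>0. \<forall>m. \<forall>s\<in>{a m..b}. Y m s \<le> barrier n e K s"
proof -
  have sub: "{a m..b} \<subseteq> {0<..b}" for m using a(1)[of m] by auto
  obtain K1 where K1: "eps \<le> K1" "\<And>s. s \<in> {0<..b} \<Longrightarrow> l s \<le> q s * barrier n 1 K1 s ^ n"
    using barriers[OF zero_less_one] by blast
  define solves where "solves m y y' \<longleftrightarrow> has_derivs2_on (a m) b y y' (\<lambda>x. (q x * y x ^ n - l x) / eps)
      \<and> y (a m) = 0 \<and> y' b = eps \<and> (\<forall>s\<in>{a m..b}. 0 \<le> y s)" for m y y'
  have "\<forall>m. \<exists>y y'. solves m y y'"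
  proof
    fix m
    obtain y y' where "has_derivs2_on (a m) b y y' (\<lambda>x. (q x * y x ^ n - l x) / eps)"
      and "y (a m) = 0" "y' b = eps" "\<And>s. s \<in> {a m..b} \<Longrightarrow> 0 \<le> y s"
      by (rule truncated_problem_solution[OF n eps a(1,2) continuous_on_subset[OF qc sub]
            continuous_on_subset[OF lc sub] _ _ K1(1)]) (use q l K1(2) sub in blast)+
    then show "\<exists>y y'. solves m y y'" unfolding solves_def by blast
  qed
  then obtain Y where "\<forall>m. \<exists>y'. solves m (Y m) y'" by (metis choice)
  then obtain Y' where "\<forall>m. solves m (Y m) (Y' m)" by (metis choice)
  then have Y: "\<And>m. has_derivs2_on (a m) b (Y m) (Y' m) (\<lambda>x. (q x * Y m x ^ n - l x) / eps)"
    and Y_left: "\<And>m. Y m (a m) = 0" and Y'_right: "\<And>m. Y' m b = eps"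
    and Y_nonneg: "\<And>m s. s \<in> {a m..b} \<Longrightarrow> 0 \<le> Y m s"
    by (auto simp: solves_def)
  have q': "\<And>x. x \<in> {a m..b} \<Longrightarrow> 0 < q x" for m using q sub by blast
  show ?thesis
  proof (rule that[OF Y Y'_right Y_nonneg])
    show "Y m s \<le> Y (Suc m) s" if s: "s \<in> {a m..b}" for m s
    proof (rule dirichlet_neumann_comparison_nonlinear[OF a(2) eps _ q' Y _ _ _ _ _ s])
      show "has_derivs2_on (a m) b (Y (Suc m)) (Y' (Suc m)) (\<lambda>x. (q x * Y (Suc m) x ^ n - l x) / eps)"
        using has_derivs2_on_subset[OF Y a(3)] by blast
      show "0 \<le> Y (Suc m) x" if "x \<in> {a m..b}" for x using Y_nonneg[of x "Suc m"] that a(3)[of m] by auto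
      show "Y m (a m) \<le> Y (Suc m) (a m)" using Y_left[of m] Y_nonneg[of "a m" "Suc m"] a(2,3)[of m] by auto
    qed (use n eps Y'_right in auto)
    show "\<exists>K\<ge>0. \<forall>m. \<forall>s\<in>{a m..b}. Y m s \<le> barrier n e K s" if e: "e > 0" for e
    proof -
      obtain K where K: "eps \<le> K" "\<And>s. s \<in> {0<..b} \<Longrightarrow> l s \<le> q s * barrier n e K s ^ n"
        using barriers[OF e] by auto
      have "Y m s \<le> barrier n e K s" if s: "s \<in> {a m..b}" for m s
      proof (rule dirichlet_neumann_comparison_nonlinear[OF a(2) eps _ q' Y barrier_derivs2[OF a(1)] _ _ _ _ s])
        show "0 \<le> barrier n e K x" if "x \<in> {a m..b}" for x
          using that a(1)[of m] e K(1) eps by (intro barrier_nonneg) auto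
        show "l x \<le> q x * barrier n e K x ^ n - eps * barrier'' n e x" if "x \<in> {a m<..<b}" for x
          using that sub[of m] by (intro barrier_supersolution n eps K(2)) (use e a(1)[of m] in auto)
        show "Y m (a m) \<le> barrier n e K (a m)"
          using Y_left[of m] a(1)[of m] e K(1) eps by (simp add: barrier_nonneg)
        show "Y' m b \<le> barrier' n e K b" using Y'_right[of m] K(1) barrier'_ge[of e n K b] e n by simp
      qed (use n in auto)
      then show ?thesis using K(1) eps by (intro exI[of _ K]) auto
    qed
  qed
qed

lemma at_within_Icc_eq_half:
  fixes s b :: real
  assumes "s \<in> {0<..b}"
  shows "at s within {0..b} = at s within {s/2..b}"
  using assms by (intro at_within_nhd[of s "{s/2<..}"]) auto

lemma decreasing_sequence_to_zero:
  fixes b :: real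
  assumes b: "b > 0"
  obtains a :: "nat \<Rightarrow> real" where "\<And>m. 0 < a m" "\<And>m. a m < b" "\<And>m. a (Suc m) \<le> a m"
    and "\<And>s. s > 0 \<Longrightarrow> \<exists>N. \<forall>k. a (k + N) < s"
proof -
  define a where "a m = b / (real m + 2)" for m :: nat
  have a: "0 < a m" "a m < b" "a (Suc m) \<le> a m" "a (k + m) \<le> a m" for m k
    using b by (simp_all add: a_def field_simps add_pos_nonneg divide_left_mono)
  have "\<exists>N. \<forall>k. a (k + N) < s" if "s > 0" for s
  proof -
    obtain N :: nat where "b / s < real N" using reals_Archimedean2 by blast
    then have "b < (real N + 2) * s" using that by (simp add: field_simps)
    then have "a N < s" using that by (simp add: a_def field_simps)
    then show ?thesis using a(4) by (meson le_less_trans)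
  qed
  then show ?thesis using that[of a] a(1-3) by blast
qed

lemma extension_by_zero_convergent:
  fixes Y :: "nat \<Rightarrow> real \<Rightarrow> real" and a :: "nat \<Rightarrow> real"
  assumes a: "\<And>m. a (Suc m) \<le> a m"
    and Y: "\<And>m s. s \<in> {a m..b} \<Longrightarrow> 0 \<le> Y m s \<and> Y m s \<le> Y (Suc m) s \<and> Y m s \<le> B"
    and s: "s \<le> b"
  shows "convergent (\<lambda>m. if s < a m then 0 else Y m s)"
proof -
  have step: "(if s < a m then 0 else Y m s) \<le> (if s < a (Suc m) then 0 else Y (Suc m) s)" for m
  proof (cases "s < a m")
    case True
    then show ?thesis using Y[of s "Suc m"] s by auto
  next
    case False
    then show ?thesis using Y[of s m] a[of m] s by auto
  qed
  have bound: "\<forall>m. (if s < a m then 0 else Y m s) \<le> max B 0"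
  proof
    fix m
    show "(if s < a m then 0 else Y m s) \<le> max B 0" using Y[of s m] s by (auto simp: not_less le_max_iff_disj)
  qed
  obtain L where "(\<lambda>m. if s < a m then 0 else Y m s) \<longlonglongrightarrow> L"
    by (rule incseq_convergent[OF incseq_SucI[where X = "\<lambda>m. if s < a m then 0 else Y m s", OF step] bound])
  then show ?thesis by (rule convergentI)
qed

lemma transformed_problem_solution:
  fixes q l :: "real \<Rightarrow> real"
  assumes n: "n \<ge> 2" and b: "b > 0" and eps: "eps > 0"
    and qc: "continuous_on {0<..b} q" and lc: "continuous_on {0<..b} l"
    and q: "\<And>s. s \<in> {0<..b} \<Longrightarrow> 0 < q s" and l: "\<And>s. s \<in> {0<..b} \<Longrightarrow> 0 \<le> l s"
    and barriers: "\<And>e. e > 0 \<Longrightarrow> \<exists>K. eps \<le> K \<and> (\<forall>s\<in>{0<..b}. l s \<le> q s * barrier n e K s ^ n)"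
  obtains W G where "W 0 = 0" and "\<And>s. s \<in> {0..b} \<Longrightarrow> 0 \<le> W s"
    and "\<And>e. e > 0 \<Longrightarrow> \<exists>K. \<forall>s\<in>{0<..b}. W s \<le> barrier n e K s"
    and "\<And>s. s \<in> {0<..b} \<Longrightarrow> (W has_real_derivative G s) (at s within {0..b})"
    and "\<And>s. s \<in> {0<..<b} \<Longrightarrow> (G has_real_derivative (q s * W s ^ n - l s) / eps) (at s)"
    and "G b = eps"
proof -
  obtain a :: "nat \<Rightarrow> real" where a: "\<And>m. 0 < a m" "\<And>m. a m < b" "\<And>m. a (Suc m) \<le> a m"
    and a_tail: "\<And>s. s > 0 \<Longrightarrow> \<exists>N. \<forall>k. a (k + N) < s"
    using decreasing_sequence_to_zero[OF b] by blast
  obtain Y Y' where Y: "\<And>m. has_derivs2_on (a m) b (Y m) (Y' m) (\<lambda>x. (q x * Y m x ^ n - l x) / eps)"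
    and Y'_right: "\<And>m. Y' m b = eps" and Y_nonneg: "\<And>m s. s \<in> {a m..b} \<Longrightarrow> 0 \<le> Y m s"
    and Y_mono: "\<And>m s. s \<in> {a m..b} \<Longrightarrow> Y m s \<le> Y (Suc m) s"
    and Y_barrier: "\<And>e. e > 0 \<Longrightarrow> \<exists>K\<ge>0. \<forall>m. \<forall>s\<in>{a m..b}. Y m s \<le> barrier n e K s"
    using monotone_approximations[where a = a, OF n eps qc lc q l barriers a] by blast
  obtain K1 where K1: "0 \<le> K1" "\<And>m s. s \<in> {a m..b} \<Longrightarrow> Y m s \<le> barrier n 1 K1 s"
    using Y_barrier[OF zero_less_one] by blast
  define B where "B = barrier n 1 K1 b"
  have Y_le_B: "Y m s \<le> B" if "s \<in> {a m..b}" for m s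
    using K1(2)[OF that] barrier_mono[OF n zero_le_one K1(1), of s b] that a(1)[of m]
    by (simp add: B_def)
  \<comment> \<open>nonnegativity keeps the sequence increasing after extension by \<open>0\<close> to \<open>[0, a m)\<close>\<close>
  define Yx where "Yx m s = (if s < a m then 0 else Y m s)" for m s
  define W where "W s = lim (\<lambda>m. Yx m s)" for s
  have W_lim: "(\<lambda>m. Yx m s) \<longlonglongrightarrow> W s" if "s \<in> {0..b}" for s
    using extension_by_zero_convergent[where a = a and Y = Y and b = b and B = B and s = s] a(3) Y_nonneg Y_mono Y_le_B that
    unfolding W_def Yx_def by (simp add: convergent_LIMSEQ_iff)
  have W_nonneg: "0 \<le> W s" if "s \<in> {0..b}" for s
    using LIMSEQ_le_const[OF W_lim[OF that]] Y_nonneg[of s] that by (simp add: Yx_def)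
  define h where "h x = (q x * W x ^ n - l x) / eps" for x
  define G where "G t = eps - integral {t..b} h" for t
  have derivs: "(W has_real_derivative G t) (at t within {s..b}) \<and> (G has_real_derivative h t) (at t within {s..b})"
    if s: "s \<in> {0<..b}" and t: "t \<in> {s..b}" for s t
  proof -
    obtain N where N: "\<And>k. a (k + N) < s" using a_tail[of s] s by auto
    have Yx_eq: "Yx (k + N) x = Y (k + N) x" if "x \<in> {s..b}" for k x
      using N[of k] that by (simp add: Yx_def)
    have "(\<lambda>k. Y (k + N) x) \<longlonglongrightarrow> W x" if "x \<in> {s..b}" for x
      using LIMSEQ_ignore_initial_segment[OF W_lim, of x N] that s by (simp add: Yx_eq)
    moreover have "\<bar>Y (k + N) x\<bar> \<le> B" if "x \<in> {s..b}" for k x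
      using Y_nonneg[of x "k + N"] Y_le_B[of x "k + N"] N[of k] that by simp
    moreover have "has_derivs2_on s b (Y (k + N)) (Y' (k + N)) (\<lambda>x. (q x * Y (k + N) x ^ n - l x) / eps)" for k
      using has_derivs2_on_subset[OF Y, of "k + N" s b] N[of k] by simp
    moreover have "{s..b} \<subseteq> {0<..b}" using s by auto
    ultimately show ?thesis
      using bounded_solutions_limit[OF _ eps continuous_on_subset[OF qc] continuous_on_subset[OF lc], of s b
          "\<lambda>k. Y (k + N)" "\<lambda>k. Y' (k + N)" n B W] s t Y'_right
      unfolding h_def[abs_def] G_def[abs_def] by auto
  qed
  show ?thesis
  proof (rule that)
    show "W 0 = 0" using W_lim[of 0] a(1) b by (simp add: Yx_def LIMSEQ_const_iff)
    show "\<exists>K. \<forall>s\<in>{0<..b}. W s \<le> barrier n e K s" if e: "e > 0" for e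
    proof -
      obtain K where K: "0 \<le> K" "\<And>m s. s \<in> {a m..b} \<Longrightarrow> Y m s \<le> barrier n e K s"
        using Y_barrier[OF e] by blast
      have "W s \<le> barrier n e K s" if "s \<in> {0<..b}" for s
        using K e that by (intro LIMSEQ_le_const2[OF W_lim]) (auto simp: Yx_def barrier_nonneg)
      then show ?thesis by blast
    qed
    show "(W has_real_derivative G s) (at s within {0..b})" if "s \<in> {0<..b}" for s
      unfolding at_within_Icc_eq_half[OF that] using derivs[of "s/2" s] that by auto
    show "(G has_real_derivative (q s * W s ^ n - l s) / eps) (at s)" if "s \<in> {0<..<b}" for s
    proof -
      have "at s within {s/2..b} = at s" using that by (intro at_within_interior) auto
      then show ?thesis using derivs[of "s/2" s] that by (auto simp: h_def)
    qed
    show "G b = eps" by (simp add: G_def)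
  qed (use W_nonneg in auto)
qed

section \<open>The radial problem\<close>

definition radius :: "nat \<Rightarrow> real \<Rightarrow> real" where
  "radius n s = root n (real n * s)"

text \<open>With \<open>s = r ^ n / n\<close> and \<open>w r = W s\<close> we have \<open>w' r = r ^ (n - 1) * W' s\<close>, and the radial
  equation divided by \<open>r ^ (2 * (n - 1))\<close> becomes
  \<open>eps * W'' s = transformed_q n s * W s ^ n - transformed_l n L s\<close> with \<open>r = radius n s\<close>.\<close>
definition transformed_q :: "nat \<Rightarrow> real \<Rightarrow> real" where
  "transformed_q n s = 1 / (real n * radius n s ^ (n * (n - 1) + 2 * (n - 1)))"

definition transformed_l :: "nat \<Rightarrow> (real \<Rightarrow> real) \<Rightarrow> real \<Rightarrow> real" where
  "transformed_l n L s = L (radius n s) / radius n s ^ (2 * (n - 1))"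

lemma radius_pos: "n > 0 \<Longrightarrow> s > 0 \<Longrightarrow> radius n s > 0"
  unfolding radius_def by (intro real_root_gt_zero) auto

lemma radius_pow: "n > 0 \<Longrightarrow> s \<ge> 0 \<Longrightarrow> radius n s ^ n = real n * s"
  unfolding radius_def by simp

lemma radius_power_div: "n > 0 \<Longrightarrow> r \<ge> 0 \<Longrightarrow> radius n (r ^ n / real n) = r"
  unfolding radius_def by (simp add: real_root_power_cancel)

lemma continuous_on_radius: "continuous_on S (radius n)"
  unfolding radius_def by (intro continuous_intros)

lemma radius_le:
  assumes "n > 0" "R \<ge> 0" "s \<le> R ^ n / real n"
  shows "radius n s \<le> R"
proof -
  have "root n (real n * s) \<le> root n (R ^ n)"
    using assms by (simp add: real_root_le_iff field_simps)
  then show ?thesis using assms(1,2) by (simp add: radius_def real_root_power_cancel)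
qed

lemma transformed_coeffs:
  assumes n: "n > 0" and R: "R \<ge> 0" and Lc: "continuous_on {0..R} L"
    and L: "\<And>r. r \<in> {0..R} \<Longrightarrow> 0 \<le> L r"
  shows "continuous_on {0<..R ^ n / real n} (transformed_q n)"
    and "continuous_on {0<..R ^ n / real n} (transformed_l n L)"
    and "\<And>s. s \<in> {0<..R ^ n / real n} \<Longrightarrow> 0 < transformed_q n s"
    and "\<And>s. s \<in> {0<..R ^ n / real n} \<Longrightarrow> 0 \<le> transformed_l n L s"
proof -
  have pos: "0 < radius n s" and le: "radius n s \<le> R" if "s \<in> {0<..R ^ n / real n}" for s
    using radius_pos[OF n, of s] radius_le[OF n R, of s] that by auto
  show "continuous_on {0<..R ^ n / real n} (transformed_q n)"
    unfolding transformed_q_def using pos n by (intro continuous_intros continuous_on_radius) (auto dest!: pos)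
  have "continuous_on {0<..R ^ n / real n} (\<lambda>s. L (radius n s))"
    by (rule continuous_on_compose2[OF Lc continuous_on_radius]) (use pos le in \<open>auto simp: less_imp_le\<close>)
  then show "continuous_on {0<..R ^ n / real n} (transformed_l n L)"
    unfolding transformed_l_def using pos by (intro continuous_intros continuous_on_radius) (auto dest!: pos)
  show "0 < transformed_q n s" if "s \<in> {0<..R ^ n / real n}" for s
    unfolding transformed_q_def using pos[OF that] n by simp
  show "0 \<le> transformed_l n L s" if "s \<in> {0<..R ^ n / real n}" for s
    unfolding transformed_l_def using pos[OF that] le[OF that] L[of "radius n s"] by simp
qed

lemma transformed_l_eq:
  assumes "n > 0" "s > 0"
  shows "transformed_l n L s = real n ^ n * s ^ (n - 1) * L (radius n s) * transformed_q n s"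
proof -
  define p where "p = n - 1"
  have np: "n = Suc p" using assms(1) by (simp add: p_def)
  define r where "r = radius n s"
  have r: "r > 0" using radius_pos[of n s] assms by (simp add: r_def)
  have rn: "r ^ n = real n * s" using radius_pow[of n s] assms by (simp add: r_def)
  have e1: "r ^ (n * (n - 1) + 2 * (n - 1)) = (r ^ n) ^ p * r ^ (2 * p)"
    by (simp add: p_def power_add power_mult)
  have nn: "real n ^ n = real n * real n ^ p" by (simp add: np)
  have sp: "s ^ p > 0" "real n ^ p > 0" "r ^ (2*p) > 0" using assms r by auto
  have "transformed_l n L s = L r / r ^ (2 * p)" unfolding transformed_l_def r_def p_def by simp
  also have "\<dots> = (real n * real n ^ p * s ^ p * L r) / (real n * (real n ^ p * s ^ p) * r ^ (2 * p))"
    using sp assms by (simp add: field_simps)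
  also have "\<dots> = (real n ^ n * s ^ p * L r) * transformed_q n s"
    unfolding transformed_q_def r_def[symmetric] e1 rn nn power_mult_distrib by simp
  finally show ?thesis by (simp add: p_def r_def)
qed

lemma transformed_l_le_barrier:
  assumes n: "n \<ge> 2" and e: "e \<ge> 0" and K: "K \<ge> 0" and s: "s > 0"
    and c: "L (radius n s) \<le> e^n / real n ^ n \<or> real n ^ n * L (radius n s) \<le> K^n * s"
  shows "transformed_q n s * barrier n e K s ^ n \<ge> transformed_l n L s"
proof -
  define p where "p = n - 1"
  have np: "n = Suc p" using n by (simp add: p_def)
  define r where "r = radius n s"
  have r: "r > 0" using radius_pos[of n s] n s by (simp add: r_def)
  have terms_nonneg: "0 \<le> e * s powr barrier_exp n" "0 \<le> K * s" using e K s by auto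
  have "barrier n e K s ^ n \<ge> real n ^ n * s ^ p * L r"
    using c[folded r_def]
  proof
    assume h: "L r \<le> e^n / real n ^ n"
    have "(e * s powr barrier_exp n) ^ n = e ^ n * s ^ p"
      using s n unfolding barrier_exp_def
      by (simp add: power_mult_distrib powr_realpow[symmetric] powr_powr p_def of_nat_diff)
    moreover have "(e * s powr barrier_exp n) ^ n \<le> barrier n e K s ^ n" unfolding barrier_def
      using terms_nonneg by (intro power_mono) auto
    moreover have "real n ^ n * s ^ p * L r \<le> real n ^ n * s ^ p * (e^n / real n ^ n)"
      using h s by (intro mult_left_mono) auto
    moreover have "real n ^ n * s ^ p * (e^n / real n ^ n) = e ^ n * s ^ p" using n by simp
    ultimately show ?thesis by linarith
  next
    assume h: "real n ^ n * L r \<le> K ^ n * s"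
    have "(K * s) ^ n = K ^ n * s * s ^ p" by (simp add: np power_mult_distrib)
    moreover have "(K * s) ^ n \<le> barrier n e K s ^ n" unfolding barrier_def
      using terms_nonneg by (intro power_mono) auto
    moreover have "real n ^ n * s ^ p * L r \<le> K ^ n * s * s ^ p"
      using mult_right_mono[OF h, of "s^p"] s by (simp add: algebra_simps)
    ultimately show ?thesis by simp
  qed
  moreover have "transformed_l n L s = (real n ^ n * s ^ p * L r) * transformed_q n s"
    using transformed_l_eq[of n s L] n s by (simp add: p_def r_def)
  moreover have "transformed_q n s > 0" unfolding transformed_q_def using r n by (simp add: r_def)
  ultimately show ?thesis by (simp add: mult.commute mult_right_mono)
qed

text \<open>Near \<open>s = 0\<close> the barrier is carried by \<open>e * s powr barrier_exp n\<close> because \<open>L\<close> is small there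
  (\<open>L\<close> is continuous with \<open>L 0 = 0\<close>); away from \<open>0\<close> a large linear part \<open>K * s\<close> takes over.\<close>
lemma transformed_barriers:
  assumes n: "n \<ge> 2" and R: "R > 0" and eps: "eps > 0" and e: "e > 0"
    and Lc: "continuous_on {0..R} L" and L0: "L 0 = 0"
  shows "\<exists>K. eps \<le> K \<and> (\<forall>s\<in>{0<..R ^ n / real n}. transformed_l n L s \<le> transformed_q n s * barrier n e K s ^ n)"
proof -
  have n0: "n > 0" using n by simp
  define thr where "thr = e ^ n / real n ^ n"
  have thr: "thr > 0" using e n0 by (simp add: thr_def)
  have "continuous (at 0 within {0..R}) L" using Lc R by (simp add: continuous_on_eq_continuous_within)
  then obtain d where d: "d > 0" "\<And>r. r \<in> {0..R} \<Longrightarrow> dist r 0 < d \<Longrightarrow> dist (L r) (L 0) < thr"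
    using thr unfolding continuous_within_eps_delta by blast
  define r0 where "r0 = min (d / 2) R"
  have r0: "r0 > 0" "r0 \<le> R" "r0 < d" using d R by (auto simp: r0_def)
  have L_small: "L r \<le> thr" if "r \<in> {0..r0}" for r
    using d(2)[of r] that r0 L0 by (auto simp: dist_real_def)
  obtain Lm where Lm: "\<And>r. r \<in> {0..R} \<Longrightarrow> L r \<le> Lm"
    using continuous_attains_sup[OF compact_Icc _ Lc] R by fastforce
  have Lm0: "Lm \<ge> 0" using Lm[of 0] L0 R by auto
  define s0 where "s0 = r0 ^ n / real n"
  have s0: "s0 > 0" using r0 n0 by (simp add: s0_def)
  define K where "K = 1 + eps + real n ^ n * Lm / s0"
  have K: "K \<ge> 1" "K \<ge> eps" using eps Lm0 s0 by (auto simp: K_def)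
  have "transformed_l n L s \<le> transformed_q n s * barrier n e K s ^ n" if s: "s \<in> {0<..R ^ n / real n}" for s
  proof (rule transformed_l_le_barrier[OF n less_imp_le[OF e]])
    have rs: "0 < radius n s" "radius n s \<le> R"
      using radius_pos[OF n0, of s] radius_le[OF n0 _, of R s] s R by auto
    show "0 \<le> K" "s > 0" using K s by auto
    show "L (radius n s) \<le> e ^ n / real n ^ n \<or> real n ^ n * L (radius n s) \<le> K ^ n * s"
    proof (cases "radius n s \<le> r0")
      case True
      then show ?thesis using L_small[of "radius n s"] rs by (auto simp: thr_def)
    next
      case False
      have "r0 ^ n < radius n s ^ n" using False r0 n0 by (intro power_strict_mono) auto
      then have "s0 < s" using radius_pow[OF n0, of s] s n0 by (simp add: s0_def field_simps)
      have "real n ^ n * L (radius n s) \<le> real n ^ n * Lm"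
        using Lm[of "radius n s"] rs by (intro mult_left_mono) auto
      also have "\<dots> = (real n ^ n * Lm / s0) * s0" using s0 by simp
      also have "\<dots> \<le> K * s0" using eps s0 unfolding K_def by (intro mult_right_mono) auto
      also have "\<dots> \<le> K * s" using \<open>s0 < s\<close> K by (intro mult_left_mono) auto
      also have "\<dots> \<le> K ^ n * s"
        using power_increasing[of 1 n K] K n0 s by (intro mult_right_mono) auto
      finally show ?thesis by blast
    qed
  qed
  then show ?thesis using K by blast
qed

lemma set_integrable_Icc_of_Ioo:
  fixes g :: "real \<Rightarrow> real"
  assumes "set_integrable lborel {a<..<b} g" "a \<le> c" "d \<le> b"
  shows "set_integrable lborel {c..d} g"
proof -
  have Ioo: "set_integrable lborel {c<..<d} g"
    by (rule set_integrable_subset[OF assms(1)]) (use assms(2,3) in auto)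
  have point: "set_integrable lborel {x} g" for x
  proof -
    have "integrable lborel (\<lambda>y. indicator {x} y *\<^sub>R g x)"
      by (rule integrable_indicator) auto
    moreover have "(\<lambda>y. indicator {x} y *\<^sub>R g x) = (\<lambda>y. indicator {x} y *\<^sub>R g y)"
      by (auto simp: indicator_def)
    ultimately show ?thesis unfolding set_integrable_def by metis
  qed
  have "set_integrable lborel ({c<..<d} \<union> {c} \<union> {d}) g"
    by (intro set_integrable_Un Ioo point) auto
  then show ?thesis by (rule set_integrable_subset) auto
qed

lemma Lf_eq_integral:
  assumes "set_integrable lborel {0<..<R} (\<lambda>t. t ^ (n - 1) * f t)" "0 \<le> r" "r \<le> R"
  shows "(\<lambda>t. t ^ (n - 1) * f t) integrable_on {0..r}"
    and "Lf n f r = integral {0..r} (\<lambda>t. t ^ (n - 1) * f t)"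
  using set_borel_integral_eq_integral[OF set_integrable_Icc_of_Ioo[OF assms(1) order_refl assms(3)]]
  by (simp_all add: Lf_def)

lemma continuous_on_Lf:
  assumes "set_integrable lborel {0<..<R} (\<lambda>t. t ^ (n - 1) * f t)" "0 \<le> R"
  shows "continuous_on {0..R} (Lf n f)"
  using continuous_on_eq[OF indefinite_integral_continuous_1[OF Lf_eq_integral(1)[OF assms(1,2) order_refl]]]
    Lf_eq_integral(2)[OF assms(1)] by auto

lemma Lf_0:
  assumes "set_integrable lborel {0<..<R} (\<lambda>t. t ^ (n - 1) * f t)" "0 \<le> R"
  shows "Lf n f 0 = 0"
  using Lf_eq_integral(2)[OF assms(1) order_refl assms(2)] by simp

lemma Lf_nonneg:
  assumes "n \<ge> 2" "AE t in lborel. t \<in> {0<..<R} \<longrightarrow> f t \<ge> 0" "r \<le> R"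
  shows "0 \<le> Lf n f r"
  unfolding Lf_def set_lebesgue_integral_def
proof (rule integral_nonneg_AE)
  show "AE t in lborel. 0 \<le> indicator {0..r} t *\<^sub>R (t ^ (n - 1) * f t)"
    using assms(2) AE_lborel_singleton[of R]
  proof eventually_elim
    case (elim t)
    then show ?case using assms(1,3) by (cases "t \<in> {0<..r}") (auto simp: indicator_def power_0_left)
  qed
qed

lemma has_real_derivative_zero_at_zero:
  fixes w :: "real \<Rightarrow> real"
  assumes "R > 0" and w0: "w 0 = 0" and nonneg: "\<And>y. y \<in> {0<..R} \<Longrightarrow> 0 \<le> w y"
    and bound: "\<And>e. e > 0 \<Longrightarrow> \<exists>K. \<forall>y\<in>{0<..R}. w y \<le> y * (e + K * y)"
  shows "(w has_real_derivative 0) (at 0 within {0..R})"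
proof -
  have "((\<lambda>y. (w y - w 0) / (y - 0)) \<longlongrightarrow> 0) (at 0 within {0..R})"
  proof (rule tendstoI)
    fix e :: real assume e: "e > 0"
    have "e / 2 > 0" using e by simp
    then obtain K where K: "\<And>y. y \<in> {0<..R} \<Longrightarrow> w y \<le> y * (e / 2 + K * y)"
      using bound by blast
    define d where "d = e / (2 * (\<bar>K\<bar> + 1))"
    have d: "d > 0" using e by (simp add: d_def add_pos_nonneg)
    show "\<forall>\<^sub>F y in at 0 within {0..R}. dist ((w y - w 0) / (y - 0)) 0 < e"
      unfolding eventually_at
    proof (intro exI[of _ d] conjI d ballI impI)
      fix y assume "y \<in> {0..R}" "y \<noteq> 0 \<and> dist y 0 < d"
      then have y: "y \<in> {0<..R}" "y < d" by (auto simp: dist_real_def)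
      have "K * y \<le> (\<bar>K\<bar> + 1) * y" using y by (intro mult_right_mono) auto
      also have "\<dots> < (\<bar>K\<bar> + 1) * d" using y by (intro mult_strict_left_mono) auto
      also have "\<dots> = e / 2"
        using abs_ge_zero[of K] by (simp add: d_def field_simps add_nonneg_pos)
      finally have "y * (e / 2 + K * y) < y * e" using y(1) by (intro mult_strict_left_mono) auto
      with K[OF y(1)] have "w y < y * e" by linarith
      then show "dist ((w y - w 0) / (y - 0)) 0 < e"
        using nonneg[OF y(1)] y(1) w0 by (simp add: dist_real_def field_simps)
    qed
  qed
  then show ?thesis by (simp add: has_field_derivative_iff)
qed

lemma power_div_powr_barrier_exp_le:
  assumes n: "n \<ge> 2" and y: "y > 0"
  shows "(y ^ n / real n) powr barrier_exp n \<le> y ^ (n - 1)"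
proof -
  have a: "0 \<le> barrier_exp n" using barrier_exp_bounds[OF n] by simp
  have "(y ^ n / real n) powr barrier_exp n \<le> (y ^ n) powr barrier_exp n"
    using n y a by (intro powr_mono2) (auto simp: divide_le_eq)
  also have "(y ^ n) powr barrier_exp n = y powr (real n * barrier_exp n)"
    using y by (simp add: powr_realpow[symmetric] powr_powr)
  also have "real n * barrier_exp n = real (n - 1)" using n by (simp add: barrier_exp_def)
  also have "y powr real (n - 1) = y ^ (n - 1)" using y by (simp add: powr_realpow)
  finally show ?thesis .
qed

lemma radial_barrier_bound:
  assumes n: "n \<ge> 2" and R: "R > 0" and e: "e > 0"
    and W: "\<And>e. e > 0 \<Longrightarrow> \<exists>K. \<forall>s\<in>{0<..R ^ n / real n}. W s \<le> barrier n e K s"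
  shows "\<exists>K. \<forall>y\<in>{0<..R}. W (y ^ n / real n) \<le> y * (e + K * y)"
proof -
  define M where "M = R ^ (n - 2) + 1"
  have M: "M > 0" using R by (simp add: M_def add_pos_nonneg)
  have "e / M > 0" using e M by simp
  then obtain K where K: "\<And>s. s \<in> {0<..R ^ n / real n} \<Longrightarrow> W s \<le> barrier n (e / M) K s"
    using W by blast
  have "W (y ^ n / real n) \<le> y * (e + (\<bar>K\<bar> * M / real n) * y)" if y: "y \<in> {0<..R}" for y
  proof -
    obtain m where m: "n = Suc (Suc m)" using n by (metis add_2_eq_Suc le_Suc_ex)
    have "y ^ (n - 2) \<le> M" using y power_mono[of y R "n - 2"] by (simp add: M_def)
    then have yM: "y ^ (n - 1) \<le> y * M" "y ^ n \<le> y * (y * M)"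
      using y by (auto simp: m intro!: mult_left_mono)
    have mem: "y ^ n / real n \<in> {0<..R ^ n / real n}"
      using y n power_mono[of y R n] by (auto intro: divide_right_mono)
    have "W (y ^ n / real n) \<le> e / M * (y ^ n / real n) powr barrier_exp n + K * (y ^ n / real n)"
      using K[OF mem] by (simp add: barrier_def)
    also have "\<dots> \<le> e / M * y ^ (n - 1) + \<bar>K\<bar> * (y ^ n / real n)"
      using power_div_powr_barrier_exp_le[OF n, of y] y e M
      by (intro add_mono mult_left_mono mult_right_mono) auto
    also have "\<dots> \<le> e / M * (y * M) + \<bar>K\<bar> * (y * (y * M) / real n)"
      using yM e M by (intro add_mono mult_left_mono divide_right_mono) auto
    also have "\<dots> = y * (e + (\<bar>K\<bar> * M / real n) * y)" using M by (simp add: field_simps)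
    finally show ?thesis .
  qed
  then show ?thesis by blast
qed

lemma radial_has_derivative_at_0:
  assumes n: "n \<ge> 2" and R: "R > 0" and W0: "W 0 = 0"
    and W_nonneg: "\<And>s. s \<in> {0..R ^ n / real n} \<Longrightarrow> 0 \<le> W s"
    and W_barrier: "\<And>e. e > 0 \<Longrightarrow> \<exists>K. \<forall>s\<in>{0<..R ^ n / real n}. W s \<le> barrier n e K s"
  shows "((\<lambda>r. W (r ^ n / real n)) has_real_derivative 0) (at 0 within {0..R})"
proof (rule has_real_derivative_zero_at_zero[OF R])
  show "W (0 ^ n / real n) = 0" using W0 n by (simp add: zero_power)
  show "0 \<le> W (y ^ n / real n)" if "y \<in> {0<..R}" for y
  proof (rule W_nonneg)
    show "y ^ n / real n \<in> {0..R ^ n / real n}"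
      using that power_mono[of y R n] by (auto intro: divide_right_mono)
  qed
  show "\<exists>K. \<forall>y\<in>{0<..R}. W (y ^ n / real n) \<le> y * (e + K * y)" if "e > 0" for e
    using radial_barrier_bound[OF n R that W_barrier] .
qed

lemma has_real_derivative_comp_power_div:
  assumes "n > 0" "r \<in> {0<..R}" and W: "(W has_real_derivative D) (at (r ^ n / real n) within {0..R ^ n / real n})"
  shows "((\<lambda>r. W (r ^ n / real n)) has_real_derivative D * r ^ (n - 1)) (at r within {0..R})"
proof -
  have maps: "(\<lambda>r. r ^ n / real n) ` {0..R} \<subseteq> {0..R ^ n / real n}"
    by (auto intro!: divide_right_mono power_mono)
  have "((\<lambda>r. r ^ n / real n) has_real_derivative real n * r ^ (n - 1) / real n) (at r within {0..R})"
    by (auto intro!: derivative_eq_intros)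
  then have "((\<lambda>r. r ^ n / real n) has_real_derivative r ^ (n - 1)) (at r within {0..R})"
    using \<open>n > 0\<close> by simp
  then show ?thesis
    using DERIV_image_chain[OF has_field_derivative_subset[OF W maps]] by (simp add: comp_def)
qed

lemma transformed_equation_radial:
  assumes "n > 0" "r > 0" "eps > 0"
  shows "- eps * r ^ (n - 1) * ((transformed_q n (r ^ n / real n) * X ^ n - transformed_l n L (r ^ n / real n)) / eps * r ^ (n - 1))
           + X ^ n / (real n * r ^ (n * (n - 1))) = L r"
proof -
  have radius: "radius n (r ^ n / real n) = r" using radius_power_div[of n r] assms by simp
  define P where "P = r ^ (n - 1)"
  define Q where "Q = r ^ (n * (n - 1))"
  have PQ: "P > 0" "Q > 0" using assms by (simp_all add: P_def Q_def)
  have e1: "r ^ (n * (n - 1) + 2 * (n - 1)) = Q * (P * P)" and e2: "r ^ (2 * (n - 1)) = P * P"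
    by (simp_all add: P_def Q_def power_add mult_2)
  show ?thesis
    unfolding transformed_q_def transformed_l_def radius e1 e2 P_def[symmetric] Q_def[symmetric]
    using PQ assms by (simp add: field_simps)
qed

lemma radial_solution_of_transformed:
  fixes W G L :: "real \<Rightarrow> real"
  assumes n: "n \<ge> 2" and R: "R > 0" and eps: "eps > 0"
    and W0: "W 0 = 0" and W_nonneg: "\<And>s. s \<in> {0..R ^ n / real n} \<Longrightarrow> 0 \<le> W s"
    and W_barrier: "\<And>e. e > 0 \<Longrightarrow> \<exists>K. \<forall>s\<in>{0<..R ^ n / real n}. W s \<le> barrier n e K s"
    and W': "\<And>s. s \<in> {0<..R ^ n / real n} \<Longrightarrow> (W has_real_derivative G s) (at s within {0..R ^ n / real n})"
    and G': "\<And>s. s \<in> {0<..<R ^ n / real n} \<Longrightarrow>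
               (G has_real_derivative (transformed_q n s * W s ^ n - transformed_l n L s) / eps) (at s)"
    and G_right: "G (R ^ n / real n) = eps"
  shows "\<exists>w w' w'' :: real \<Rightarrow> real.
           (\<forall>r\<in>{0..R}. w r \<ge> 0)
         \<and> (\<forall>r\<in>{0..R}. (w has_real_derivative w' r) (at r within {0..R}))
         \<and> (\<forall>r\<in>{0<..<R}. (w' has_real_derivative w'' r) (at r))
         \<and> (\<forall>r\<in>{0<..<R}.
              - eps * r ^ (n - 1) * deriv (\<lambda>s. w' s / s ^ (n - 1)) r
              + w r ^ n / (real n * r ^ (n * (n - 1))) = L r)
         \<and> w 0 = 0 \<and> w' 0 = 0 \<and> w' R = eps * R ^ (n - 1)"
proof -
  have n0: "n > 0" using n by simp
  define sg where "sg r = r ^ n / real n" for r :: real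
  have sg_Icc: "sg r \<in> {0..sg R}" and sg_Ioc: "r \<noteq> 0 \<Longrightarrow> sg r \<in> {0<..sg R}" if "r \<in> {0..R}" for r
    using that n0 power_mono[of r R n] by (auto simp: sg_def divide_right_mono)
  have sg_Ioo: "sg r \<in> {0<..<sg R}" if "r \<in> {0<..<R}" for r
    using that n0 power_strict_mono[of r R n] by (auto simp: sg_def divide_strict_right_mono)
  have sg_deriv: "(sg has_real_derivative r ^ (n - 1)) (at r)" for r
  proof -
    have "(sg has_real_derivative real n * r ^ (n - 1) / real n) (at r)"
      unfolding sg_def by (auto intro!: derivative_eq_intros)
    then show ?thesis using n0 by simp
  qed
  define h where "h s = (transformed_q n s * W s ^ n - transformed_l n L s) / eps" for s
  define w where "w r = W (sg r)" for r
  define w' where "w' r = (if r = 0 then 0 else r ^ (n - 1) * G (sg r))" for r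
  define w'' where "w'' r = real (n - 1) * r ^ (n - 1 - 1) * G (sg r) + r ^ (n - 1) * (h (sg r) * r ^ (n - 1))" for r
  have G_sg: "((\<lambda>s. G (sg s)) has_real_derivative h (sg r) * r ^ (n - 1)) (at r)" if "r \<in> {0<..<R}" for r
    using DERIV_chain2[OF G'[OF sg_Ioo[OF that, unfolded sg_def], folded sg_def h_def] sg_deriv] .
  have w_deriv: "(w has_real_derivative w' r) (at r within {0..R})" if r: "r \<in> {0..R}" for r
  proof (cases "r = 0")
    case True
    then show ?thesis using radial_has_derivative_at_0[OF n R W0 W_nonneg W_barrier]
      by (simp add: w_def[abs_def] sg_def[abs_def] w'_def)
  next
    case False
    have "((\<lambda>r. W (r ^ n / real n)) has_real_derivative G (sg r) * r ^ (n - 1)) (at r within {0..R})"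
      using False r W'[OF sg_Ioc[OF r False, unfolded sg_def]]
      by (intro has_real_derivative_comp_power_div[OF n0]) (auto simp: sg_def)
    then have "(w has_real_derivative G (sg r) * r ^ (n - 1)) (at r within {0..R})"
      by (simp add: w_def[abs_def] sg_def[abs_def])
    then show ?thesis using False by (simp add: w'_def mult.commute)
  qed
  have w'_deriv: "(w' has_real_derivative w'' r) (at r)" if r: "r \<in> {0<..<R}" for r
  proof -
    have "((\<lambda>s. s ^ (n - 1) * G (sg s)) has_real_derivative w'' r) (at r)"
      unfolding w''_def using G_sg[OF r] by (auto intro!: derivative_eq_intros)
    then show ?thesis
      by (rule has_field_derivative_transform_within_open[of _ _ _ "{0<..}"]) (use r in \<open>auto simp: w'_def\<close>)
  qed
  have equation: "- eps * r ^ (n - 1) * deriv (\<lambda>s. w' s / s ^ (n - 1)) r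
      + w r ^ n / (real n * r ^ (n * (n - 1))) = L r" if r: "r \<in> {0<..<R}" for r
  proof -
    have "((\<lambda>s. w' s / s ^ (n - 1)) has_real_derivative h (sg r) * r ^ (n - 1)) (at r)"
      by (rule has_field_derivative_transform_within_open[OF G_sg[OF r], of "{0<..}"])
         (use r in \<open>auto simp: w'_def\<close>)
    then have "deriv (\<lambda>s. w' s / s ^ (n - 1)) r = h (sg r) * r ^ (n - 1)" by (rule DERIV_imp_deriv)
    then show ?thesis
      using transformed_equation_radial[OF n0 _ eps, of r "W (sg r)" L] r
      by (simp add: h_def w_def sg_def)
  qed
  show ?thesis
  proof (intro exI conjI ballI)
    show "w 0 = 0" "w' 0 = 0" using W0 n0 by (simp_all add: w_def w'_def sg_def zero_power)
    show "w' R = eps * R ^ (n - 1)" using R G_right by (simp add: w'_def sg_def)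
    show "0 \<le> w r" if "r \<in> {0..R}" for r using W_nonneg sg_Icc[OF that] by (simp add: w_def sg_def)
  qed (use w_deriv w'_deriv equation in auto)
qed

theorem theorem3p5:
  fixes n :: nat and R \<epsilon> :: real and f :: "real \<Rightarrow> real"
  assumes "n \<ge> 2" and "R > 0" and "\<epsilon> > 0"
    and "set_integrable lborel {0<..<R} (\<lambda>t. t ^ (n - 1) * f t)"
    and "AE t in lborel. t \<in> {0<..<R} \<longrightarrow> f t \<ge> 0"
    and "\<not> (AE t in lborel. t \<in> {0<..<R} \<longrightarrow> f t = 0)"
  shows "\<exists>w w' w'' :: real \<Rightarrow> real.
           (\<forall>r\<in>{0..R}. w r \<ge> 0)
         \<and> (\<forall>r\<in>{0..R}. (w has_real_derivative w' r) (at r within {0..R}))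
         \<and> (\<forall>r\<in>{0<..<R}. (w' has_real_derivative w'' r) (at r))
         \<and> (\<forall>r\<in>{0<..<R}.
              - \<epsilon> * r ^ (n - 1) * deriv (\<lambda>s. w' s / s ^ (n - 1)) r
              + w r ^ n / (real n * r ^ (n * (n - 1))) = Lf n f r)
         \<and> w 0 = 0 \<and> w' 0 = 0 \<and> w' R = \<epsilon> * R ^ (n - 1)"
proof -
  note n = assms(1) and R = assms(2) and eps = assms(3) and int = assms(4)
  have L_cont: "continuous_on {0..R} (Lf n f)" using continuous_on_Lf[OF int] R by simp
  have L_0: "Lf n f 0 = 0" using Lf_0[OF int] R by simp
  have L_nonneg: "\<And>r. r \<in> {0..R} \<Longrightarrow> 0 \<le> Lf n f r" using Lf_nonneg[OF n assms(5)] by simp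
  have b: "R ^ n / real n > 0" using R n by simp
  note coeffs = transformed_coeffs[OF _ less_imp_le[OF R] L_cont L_nonneg]
  obtain W G where "W 0 = 0" "\<And>s. s \<in> {0..R ^ n / real n} \<Longrightarrow> 0 \<le> W s"
    "\<And>e. e > 0 \<Longrightarrow> \<exists>K. \<forall>s\<in>{0<..R ^ n / real n}. W s \<le> barrier n e K s"
    "\<And>s. s \<in> {0<..R ^ n / real n} \<Longrightarrow> (W has_real_derivative G s) (at s within {0..R ^ n / real n})"
    "\<And>s. s \<in> {0<..<R ^ n / real n} \<Longrightarrow>
       (G has_real_derivative (transformed_q n s * W s ^ n - transformed_l n (Lf n f) s) / \<epsilon>) (at s)"
    "G (R ^ n / real n) = \<epsilon>"
    using transformed_problem_solution[OF n b eps coeffs transformed_barriers[OF n R eps _ L_cont L_0]] n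
    by auto
  then show ?thesis by (rule radial_solution_of_transformed[OF n R eps])
qed

end
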